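(* Fix $\mu\in(0,1)$ and $0<\varepsilon<\sqrt{\mu}$. For $N\ge 1$ let $Z_t=(X_t,Y_t)$ be the diffusion on $[0,1]^2$ with generator $$L_1 f=\tfrac12 x(1-x)\tfrac{\partial^2 f}{\partial x^2}+2N(1-x)(\mu-x^2y^2)\tfrac{\partial f}{\partial x}+\tfrac12 y(1-y)\tfrac{\partial^2 f}{\partial y^2}+2N(1-y)(\mu-x^2y^2)\tfrac{\partial f}{\partial y},$$ and let $Z^0_t$ be the solution of the ordinary differential equation $\frac{dx}{dt}=2N(1-x)(\mu-x^2y^2)$, $\frac{dy}{dt}=2N(1-y)(\mu-x^2y^2)$ (i.e. the system $\frac{dx}{dt}=(1-x)(\mu-x^2y^2)$, $\frac{dy}{dt}=(1-y)(\mu-x^2y^2)$ run at rate $2N$), both started from the same point $(X_0,Y_0)$. Then there is a constant $\gamma>0$ depending on $\varepsilon$ (and $\mu$) such that for all $N$ sufficiently large and all $(X_0,Y_0)\in[\varepsilon,1-\varepsilon]^2$, $$E\Big(\sup_{0\le t\le \gamma\log N/N}|Z_t-Z^0_t|^2\Big)\le N^{-1/2}.$$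
   Context: This is the diffusion limit (Kimura–King) of Watterson's double recessive null model of gene duplication: $x$ and $y$ are the frequencies of nonfunctional alleles at the two unlinked duplicate loci, and $\mu$ is the (fixed, $N$-independent) mutation rate to nonfunctional alleles. *)

theory Defs
  imports "HOL-Probability.Probability"
begin

definition C2_partials ::
  "(real \<times> real \<Rightarrow> real) \<Rightarrow> (real \<times> real \<Rightarrow> real) \<Rightarrow> (real \<times> real \<Rightarrow> real) \<Rightarrow>
   (real \<times> real \<Rightarrow> real) \<Rightarrow> (real \<times> real \<Rightarrow> real) \<Rightarrow> (real \<times> real \<Rightarrow> real) \<Rightarrow> bool" where
  "C2_partials f fx fy fxx fxy fyy \<longleftrightarrow>
     (\<forall>x y. ((\<lambda>u. f (u, y)) has_real_derivative fx (x, y)) (at x) \<and>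
            ((\<lambda>v. f (x, v)) has_real_derivative fy (x, y)) (at y) \<and>
            ((\<lambda>u. fx (u, y)) has_real_derivative fxx (x, y)) (at x) \<and>
            ((\<lambda>v. fx (x, v)) has_real_derivative fxy (x, y)) (at y) \<and>
            ((\<lambda>v. fy (x, v)) has_real_derivative fyy (x, y)) (at y)) \<and>
     continuous_on UNIV f \<and> continuous_on UNIV fx \<and> continuous_on UNIV fy \<and>
     continuous_on UNIV fxx \<and> continuous_on UNIV fxy \<and> continuous_on UNIV fyy"

definition L1 :: "nat \<Rightarrow> real \<Rightarrow> (real \<times> real \<Rightarrow> real) \<Rightarrow> (real \<times> real \<Rightarrow> real) \<Rightarrow>
    (real \<times> real \<Rightarrow> real) \<Rightarrow> (real \<times> real \<Rightarrow> real) \<Rightarrow> real \<times> real \<Rightarrow> real" where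
  "L1 N \<mu> fx fy fxx fyy z =
     (let x = fst z; y = snd z in
        1/2 * x * (1 - x) * fxx z + 2 * real N * (1 - x) * (\<mu> - x^2 * y^2) * fx z
      + 1/2 * y * (1 - y) * fyy z + 2 * real N * (1 - y) * (\<mu> - x^2 * y^2) * fy z)"

definition is_filtration :: "'a measure \<Rightarrow> (real \<Rightarrow> 'a measure) \<Rightarrow> bool" where
  "is_filtration M F \<longleftrightarrow>
     (\<forall>t. space (F t) = space M \<and> sets (F t) \<subseteq> sets M) \<and>
     (\<forall>s t. 0 \<le> s \<longrightarrow> s \<le> t \<longrightarrow> sets (F s) \<subseteq> sets (F t))"

text \<open>Z is the diffusion with generator L1 started at z0: a continuous [0,1]^2-valued
  process, adapted to the filtration F, solving the (Stroock--Varadhan) martingale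
  problem for L1, i.e. for every C^2 function f,
  f(Z_t) - f(Z_0) - int_0^t L1 f(Z_s) ds is an F-martingale.\<close>
definition solves_mp_L1 ::
  "nat \<Rightarrow> real \<Rightarrow> 'a measure \<Rightarrow> (real \<Rightarrow> 'a measure) \<Rightarrow> (real \<Rightarrow> 'a \<Rightarrow> real \<times> real)
     \<Rightarrow> real \<times> real \<Rightarrow> bool" where
  "solves_mp_L1 N \<mu> M F Z z0 \<longleftrightarrow>
     prob_space M \<and> is_filtration M F \<and>
     (\<forall>t\<ge>0. Z t \<in> borel_measurable (F t)) \<and>
     (\<forall>\<omega>\<in>space M. Z 0 \<omega> = z0 \<and> continuous_on {0..} (\<lambda>t. Z t \<omega>) \<and>
        (\<forall>t\<ge>0. Z t \<omega> \<in> {0..1} \<times> {0..1})) \<and>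
     (\<forall>f fx fy fxx fxy fyy. C2_partials f fx fy fxx fxy fyy \<longrightarrow>
        (let Mf = (\<lambda>t \<omega>. f (Z t \<omega>) - f (Z 0 \<omega>)
                          - integral {0..t} (\<lambda>s. L1 N \<mu> fx fy fxx fyy (Z s \<omega>)))
         in (\<forall>t\<ge>0. integrable M (Mf t) \<and> Mf t \<in> borel_measurable (F t)) \<and>
            (\<forall>s t. 0 \<le> s \<longrightarrow> s \<le> t \<longrightarrow>
               (\<forall>A\<in>sets (F s). (LINT \<omega>:A|M. Mf t \<omega>) = (LINT \<omega>:A|M. Mf s \<omega>)))))"

definition ode_sol_L1 :: "nat \<Rightarrow> real \<Rightarrow> real \<times> real \<Rightarrow> (real \<Rightarrow> real \<times> real) \<Rightarrow> bool" where
  "ode_sol_L1 N \<mu> z0 w \<longleftrightarrow> w 0 = z0 \<and>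
     (\<forall>t\<ge>0. (w has_vector_derivative
        (2 * real N * (1 - fst (w t)) * (\<mu> - (fst (w t))^2 * (snd (w t))^2),
         2 * real N * (1 - snd (w t)) * (\<mu> - (fst (w t))^2 * (snd (w t))^2)))
        (at t within {0..}))"

end

theory Submission
  imports Defs
begin

(*
  Write Z = (X, Y) and, for a coordinate c \<in> {fst, snd}, b_c(z) = 2N (1 - c z) (mu - x^2 y^2)
  for its drift.  The martingale problem, applied to f = c and f = c^2, yields the martingales
    M^c_t = c(Z_t) - c(Z_0) - \<integral>_0^t b_c(Z_s) ds,
    c(Z_t)^2 - c(Z_0)^2 - \<integral>_0^t (c (1 - c) + 2 c b_c)(Z_s) ds.
  The proof has three parts.
  (1) Stochastic part: the second martingale identifies the quadratic variation of M^c as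
      \<integral> c (1 - c) \<le> t/4, whence E (M^c_T)^2 \<le> T/4 (grid expansion of (M^c_T)^2, orthogonality
      of martingale increments, Fatou's lemma); Doob's L^2 inequality on time grids then bounds
      E max_k (M^c_{kT/n})^2 by T.
*)

section \<open>Filtrations and martingales\<close>

definition martingale_on :: "'a measure \<Rightarrow> (real \<Rightarrow> 'a measure) \<Rightarrow> (real \<Rightarrow> 'a \<Rightarrow> real) \<Rightarrow> bool" where
  "martingale_on M F Mt \<longleftrightarrow>
     (\<forall>t\<ge>0. integrable M (Mt t) \<and> Mt t \<in> borel_measurable (F t)) \<and>
     (\<forall>s t. 0 \<le> s \<longrightarrow> s \<le> t \<longrightarrow> (\<forall>A\<in>sets (F s). (LINT \<omega>:A|M. Mt t \<omega>) = (LINT \<omega>:A|M. Mt s \<omega>)))"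

lemma filtration_subalgebra: "is_filtration M F \<Longrightarrow> subalgebra M (F s)"
  unfolding is_filtration_def subalgebra_def by auto

lemma filtration_measurable:
  "is_filtration M F \<Longrightarrow> f \<in> borel_measurable (F s) \<Longrightarrow> f \<in> borel_measurable M"
  using measurable_from_subalg filtration_subalgebra by blast

lemma filtration_measurable_mono:
  assumes "is_filtration M F" "0 \<le> s" "s \<le> t" "f \<in> borel_measurable (F s)"
  shows "f \<in> borel_measurable (F t)"
proof -
  have "subalgebra (F t) (F s)" using assms unfolding is_filtration_def subalgebra_def by auto
  then show ?thesis using measurable_from_subalg assms(4) by blast
qed

lemma martingale_measurable:
  "martingale_on M F Mt \<Longrightarrow> is_filtration M F \<Longrightarrow> 0 \<le> t \<Longrightarrow> Mt t \<in> borel_measurable M"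
  unfolding martingale_on_def using filtration_measurable by blast

lemma (in finite_measure) integrable_bounded_real:
  fixes f :: "'a \<Rightarrow> real"
  assumes "f \<in> borel_measurable M" "\<And>\<omega>. \<omega> \<in> space M \<Longrightarrow> \<bar>f \<omega>\<bar> \<le> C"
  shows "integrable M f"
  using assms by (intro integrable_const_bound[where B=C]) auto

lemma abs_square_le: "\<bar>a::real\<bar> \<le> B \<Longrightarrow> \<bar>a^2\<bar> \<le> B * B"
  by (simp add: power2_eq_square[symmetric]) (metis abs_ge_zero power2_abs power_mono)

lemma integrable_bounded_times:
  fixes g h :: "'a \<Rightarrow> real"
  assumes g: "integrable M g" and h: "h \<in> borel_measurable M"
    and hb: "\<And>\<omega>. \<omega> \<in> space M \<Longrightarrow> \<bar>h \<omega>\<bar> \<le> C"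
  shows "integrable M (\<lambda>\<omega>. h \<omega> * g \<omega>)"
proof (rule Bochner_Integration.integrable_bound[where f="\<lambda>\<omega>. C * g \<omega>"])
  show "integrable M (\<lambda>\<omega>. C * g \<omega>)" using g by simp
  show "(\<lambda>\<omega>. h \<omega> * g \<omega>) \<in> borel_measurable M" using h g by measurable
  show "AE \<omega> in M. norm (h \<omega> * g \<omega>) \<le> norm (C * g \<omega>)"
  proof (rule AE_I2)
    fix \<omega> assume "\<omega> \<in> space M"
    then have "\<bar>h \<omega>\<bar> \<le> \<bar>C\<bar>" using hb[of \<omega>] by linarith
    then show "norm (h \<omega> * g \<omega>) \<le> norm (C * g \<omega>)" by (simp add: abs_mult mult_right_mono)
  qed
qed

text \<open>A martingale increment is orthogonal to every bounded function measurable at the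
  earlier time: E[h (M_t - M_s)] = 0.  This is the only property of martingales used below.\<close>
lemma martingale_increment_orthogonal:
  assumes P: "prob_space M" and Fi: "is_filtration M F" and m: "martingale_on M F Mt"
    and st: "0 \<le> s" "s \<le> t" and h: "h \<in> borel_measurable (F s)"
    and hb: "\<And>\<omega>. \<omega> \<in> space M \<Longrightarrow> \<bar>h \<omega>\<bar> \<le> C"
  shows "(\<integral>\<omega>. h \<omega> * (Mt t \<omega> - Mt s \<omega>) \<partial>M) = 0"
proof -
  interpret prob_space M by fact
  have sub: "subalgebra M (F s)" using Fi by (rule filtration_subalgebra)
  interpret S: finite_measure_subalgebra M "F s"
    by unfold_locales (rule sub)
  have it: "integrable M (Mt t)" and iS: "integrable M (Mt s)" and ms: "Mt s \<in> borel_measurable (F s)"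
    using m st unfolding martingale_on_def by auto
  have mt: "Mt t \<in> borel_measurable M" using it by auto
  have hM: "h \<in> borel_measurable M" by (rule measurable_from_subalg[OF sub h])
  have cond_exp: "AE x in M. real_cond_exp M (F s) (Mt t) x = Mt s x"
  proof (rule S.real_cond_exp_charact)
    fix A assume "A \<in> sets (F s)"
    then show "(LINT x:A|M. Mt t x) = (LINT x:A|M. Mt s x)" using m st unfolding martingale_on_def by blast
  qed (use it iS ms in auto)
  have bounded_times: "integrable M (\<lambda>x. h x * Mt r x)" if "integrable M (Mt r)" for r
    by (rule integrable_bounded_times[OF that hM hb])
  have "(\<integral>x. h x * Mt t x \<partial>M) = (\<integral>x. h x * real_cond_exp M (F s) (Mt t) x \<partial>M)"
    using S.real_cond_exp_intg(2)[OF bounded_times[OF it] h mt] by simp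
  also have "\<dots> = (\<integral>x. h x * Mt s x \<partial>M)"
    by (rule integral_cong_AE) (use cond_exp hM mt bounded_times[OF iS] in auto)
  finally show ?thesis using bounded_times[OF it] bounded_times[OF iS] by (simp add: right_diff_distrib)
qed

section \<open>Doob's L2 inequality on time grids\<close>

fun running_max :: "(nat \<Rightarrow> real) \<Rightarrow> nat \<Rightarrow> real" where
  "running_max x 0 = \<bar>x 0\<bar>"
| "running_max x (Suc k) = max (running_max x k) \<bar>x (Suc k)\<bar>"

lemma running_max_ge: "k \<le> n \<Longrightarrow> \<bar>x k\<bar> \<le> running_max x n"
proof (induction n)
  case 0 then show ?case by simp
next
  case (Suc n) then show ?case by (cases "k = Suc n") auto
qed

lemma running_max_nonneg: "0 \<le> running_max x n"
  by (induction n) auto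

lemma running_max_le: "(\<And>k. k \<le> n \<Longrightarrow> \<bar>x k\<bar> \<le> B) \<Longrightarrow> running_max x n \<le> B"
  by (induction n) auto

lemma running_max_measurable:
  "(\<And>k. k \<le> n \<Longrightarrow> (\<lambda>\<omega>. x \<omega> k) \<in> borel_measurable M) \<Longrightarrow> (\<lambda>\<omega>. running_max (x \<omega>) n) \<in> borel_measurable M"
  by (induction n) auto

lemma running_max_summation:
  "4 * (\<Sum>k<n. running_max x k * (\<bar>x (Suc k)\<bar> - \<bar>x k\<bar>))
     \<le> 4 * running_max x n * \<bar>x n\<bar> - 2 * (running_max x n)^2"
proof (induction n)
  case 0 then show ?case by (simp add: power2_eq_square)
next
  case (Suc n)
  define m where "m = running_max x n"
  define a where "a = \<bar>x (Suc n)\<bar>"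
  have "4 * m * a - 2 * m^2 \<le> 4 * max m a * a - 2 * (max m a)^2"
  proof (cases "a \<le> m")
    case True then show ?thesis by (simp add: max_def)
  next
    case False
    have "0 \<le> 2 * (a - m)^2" by simp
    then show ?thesis using False by (simp add: max_def power2_eq_square algebra_simps)
  qed
  then show ?case using Suc by (simp add: m_def a_def algebra_simps)
qed

text \<open>Pathwise form of Doob's L^2 inequality: r_n^2 \<le> 4 x_n^2 minus a discrete stochastic
  integral whose integrand r_k sgn(x_k) is known at time k.\<close>
lemma running_max_square_le:
  "(running_max x n)^2 \<le> 4 * (x n)^2 - 4 * (\<Sum>k<n. running_max x k * sgn (x k) * (x (Suc k) - x k))"
proof -
  have "(\<Sum>k<n. running_max x k * sgn (x k) * (x (Suc k) - x k))
        \<le> (\<Sum>k<n. running_max x k * (\<bar>x (Suc k)\<bar> - \<bar>x k\<bar>))"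
  proof (rule sum_mono)
    fix k
    have "sgn (x k) * (x (Suc k) - x k) \<le> \<bar>x (Suc k)\<bar> - \<bar>x k\<bar>"
      by (cases "x k" rule: linorder_cases) (auto simp: sgn_if abs_if)
    then show "running_max x k * sgn (x k) * (x (Suc k) - x k) \<le> running_max x k * (\<bar>x (Suc k)\<bar> - \<bar>x k\<bar>)"
      using running_max_nonneg[of x k] by (metis mult.assoc mult_left_mono)
  qed
  moreover have "(2 * \<bar>x n\<bar> - running_max x n)^2 = 4 * (x n)^2 - 4 * running_max x n * \<bar>x n\<bar> + (running_max x n)^2"
    by (simp add: power2_eq_square algebra_simps)
  moreover have "0 \<le> (2 * \<bar>x n\<bar> - running_max x n)^2" by simp
  ultimately show ?thesis using running_max_summation[of x n] by linarith
qed

lemma (in prob_space) doob_L2_discrete: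
  fixes x :: "'a \<Rightarrow> nat \<Rightarrow> real"
  assumes meas: "\<And>k. (\<lambda>\<omega>. x \<omega> k) \<in> borel_measurable M"
    and bd: "\<And>\<omega> k. \<omega> \<in> space M \<Longrightarrow> k \<le> n \<Longrightarrow> \<bar>x \<omega> k\<bar> \<le> B"
    and orth: "\<And>k. k < n \<Longrightarrow>
      (\<integral>\<omega>. running_max (x \<omega>) k * sgn (x \<omega> k) * (x \<omega> (Suc k) - x \<omega> k) \<partial>M) = 0"
  shows "(\<integral>\<omega>. (running_max (x \<omega>) n)^2 \<partial>M) \<le> 4 * (\<integral>\<omega>. (x \<omega> n)^2 \<partial>M)"
proof -
  define I where "I k \<omega> = running_max (x \<omega>) k * sgn (x \<omega> k) * (x \<omega> (Suc k) - x \<omega> k)" for k \<omega>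
  have rmax_bd: "running_max (x \<omega>) k \<le> B" if "\<omega> \<in> space M" "k \<le> n" for \<omega> k
    using running_max_le[of k "x \<omega>" B] bd that by auto
  have rmax_meas: "(\<lambda>\<omega>. running_max (x \<omega>) k) \<in> borel_measurable M" for k
    by (rule running_max_measurable) (rule meas)
  have I_int: "integrable M (I k)" if "k < n" for k
  proof (rule integrable_bounded_real[of _ "B * (B + B)"])
    show "I k \<in> borel_measurable M" unfolding I_def using rmax_meas meas by measurable
    fix \<omega> assume om: "\<omega> \<in> space M"
    have "\<bar>x \<omega> (Suc k) - x \<omega> k\<bar> \<le> B + B" using bd[OF om, of k] bd[OF om, of "Suc k"] that by simp
    moreover have "\<bar>running_max (x \<omega>) k * sgn (x \<omega> k)\<bar> \<le> B"
      using rmax_bd[OF om, of k] that running_max_nonneg[of "x \<omega>" k] by (auto simp: abs_mult sgn_if)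
    ultimately show "\<bar>I k \<omega>\<bar> \<le> B * (B + B)"
      unfolding I_def abs_mult[of _ "x \<omega> (Suc k) - x \<omega> k"] by (intro mult_mono) auto
  qed
  have sq_int: "integrable M (\<lambda>\<omega>. (x \<omega> n)^2)"
    by (rule integrable_bounded_real[of _ "B * B"]) (use meas bd abs_square_le in auto)
  have rmax_sq_int: "integrable M (\<lambda>\<omega>. (running_max (x \<omega>) n)^2)"
    by (rule integrable_bounded_real[of _ "B * B"])
       (use rmax_meas rmax_bd running_max_nonneg abs_square_le in auto)
  have sum_int: "integrable M (\<lambda>\<omega>. \<Sum>k<n. I k \<omega>)"
    by (rule Bochner_Integration.integrable_sum) (use I_int in auto)
  have "(\<integral>\<omega>. (running_max (x \<omega>) n)^2 \<partial>M) \<le> (\<integral>\<omega>. 4 * (x \<omega> n)^2 - 4 * (\<Sum>k<n. I k \<omega>) \<partial>M)"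
    by (rule integral_mono) (use rmax_sq_int sq_int sum_int running_max_square_le in \<open>auto simp: I_def\<close>)
  also have "\<dots> = 4 * (\<integral>\<omega>. (x \<omega> n)^2 \<partial>M) - 4 * (\<Sum>k<n. (\<integral>\<omega>. I k \<omega> \<partial>M))"
    using sq_int sum_int I_int by (simp add: Bochner_Integration.integral_sum)
  also have "\<dots> = 4 * (\<integral>\<omega>. (x \<omega> n)^2 \<partial>M)" using orth by (simp add: I_def)
  finally show ?thesis .
qed

definition grid :: "real \<Rightarrow> nat \<Rightarrow> nat \<Rightarrow> real" where
  "grid T n k = real k * T / real n"

definition grid_max :: "real \<Rightarrow> (real \<Rightarrow> real) \<Rightarrow> nat \<Rightarrow> real" where
  "grid_max T m n = running_max (\<lambda>k. m (grid T n k)) n"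

lemma grid_nonneg: "0 \<le> T \<Longrightarrow> 0 \<le> grid T n k"
  by (simp add: grid_def)

lemma grid_le: "0 \<le> T \<Longrightarrow> k \<le> n \<Longrightarrow> grid T n k \<le> T"
  by (cases "n = 0") (simp_all add: grid_def field_simps mult_left_mono)

lemma grid_mono: "0 \<le> T \<Longrightarrow> j \<le> k \<Longrightarrow> grid T n j \<le> grid T n k"
  by (simp add: grid_def divide_right_mono mult_right_mono)

lemma grid_Suc: "grid T n (Suc k) = grid T n k + T / real n"
  by (simp add: grid_def add_divide_distrib algebra_simps)

lemma grid_zero [simp]: "grid T n 0 = 0"
  by (simp add: grid_def)

lemma grid_last: "0 < n \<Longrightarrow> grid T n n = T"
  by (simp add: grid_def)

lemma doob_L2_grid:
  assumes P: "prob_space M" and Fi: "is_filtration M F" and m: "martingale_on M F Mt"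
    and T: "0 \<le> T" and n: "0 < n"
    and bd: "\<And>t \<omega>. \<omega> \<in> space M \<Longrightarrow> 0 \<le> t \<Longrightarrow> t \<le> T \<Longrightarrow> \<bar>Mt t \<omega>\<bar> \<le> B"
  shows "(\<integral>\<omega>. (grid_max T (\<lambda>t. Mt t \<omega>) n)^2 \<partial>M) \<le> 4 * (\<integral>\<omega>. (Mt T \<omega>)^2 \<partial>M)"
proof -
  interpret prob_space M by fact
  define x where "x \<omega> k = Mt (grid T n k) \<omega>" for \<omega> k
  have xF: "(\<lambda>\<omega>. x \<omega> k) \<in> borel_measurable (F (grid T n k))" for k
    using m grid_nonneg[OF T] unfolding martingale_on_def x_def by auto
  have xF': "(\<lambda>\<omega>. x \<omega> j) \<in> borel_measurable (F (grid T n k))" if "j \<le> k" for j k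
    by (rule filtration_measurable_mono[OF Fi grid_nonneg[OF T] grid_mono[OF T that] xF])
  have xb: "\<bar>x \<omega> k\<bar> \<le> B" if "\<omega> \<in> space M" "k \<le> n" for k \<omega>
    using bd grid_nonneg[OF T] grid_le[OF T] that unfolding x_def by auto
  have rmax_F: "(\<lambda>\<omega>. running_max (x \<omega>) k) \<in> borel_measurable (F (grid T n k))" for k
    by (rule running_max_measurable) (use xF' in auto)
  have "(\<integral>\<omega>. (running_max (x \<omega>) n)^2 \<partial>M) \<le> 4 * (\<integral>\<omega>. (x \<omega> n)^2 \<partial>M)"
  proof (rule doob_L2_discrete)
    show "(\<lambda>\<omega>. x \<omega> k) \<in> borel_measurable M" for k by (rule filtration_measurable[OF Fi xF])
    show "\<bar>x \<omega> k\<bar> \<le> B" if "\<omega> \<in> space M" "k \<le> n" for \<omega> k using xb that .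
    fix k assume k: "k < n"
    have "\<bar>running_max (x \<omega>) k * sgn (x \<omega> k)\<bar> \<le> B" if "\<omega> \<in> space M" for \<omega>
      using running_max_le[of k "x \<omega>" B] xb[OF that] k running_max_nonneg[of "x \<omega>" k]
      by (auto simp: abs_mult sgn_if)
    then show "(\<integral>\<omega>. running_max (x \<omega>) k * sgn (x \<omega> k) * (x \<omega> (Suc k) - x \<omega> k) \<partial>M) = 0"
      using martingale_increment_orthogonal[OF P Fi m grid_nonneg[OF T] grid_mono[OF T, of k "Suc k" n],
          of "\<lambda>\<omega>. running_max (x \<omega>) k * sgn (x \<omega> k)" B] rmax_F xF
      unfolding x_def by (simp add: mult.assoc)
  qed
  then show ?thesis by (simp add: grid_max_def x_def[abs_def] grid_last[OF n])
qed

section \<open>The second moment of the martingale part of a bounded coordinate\<close>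

lemma integral_le_length_times:
  fixes f :: "real \<Rightarrow> real"
  assumes "continuous_on {a..b} f" "a \<le> b" "\<And>s. s \<in> {a..b} \<Longrightarrow> f s \<le> c"
  shows "integral {a..b} f \<le> (b - a) * c"
proof -
  have "integral {a..b} f \<le> integral {a..b} (\<lambda>s. c)"
    by (rule integral_le) (use assms in \<open>auto intro: integrable_continuous_interval\<close>)
  then show ?thesis using assms(2) by simp
qed

lemma integral_split:
  fixes f :: "real \<Rightarrow> real"
  assumes "continuous_on {a..b} f" "a \<le> c" "c \<le> b"
  shows "integral {a..b} f = integral {a..c} f + integral {c..b} f"
  using Henstock_Kurzweil_Integration.integral_combine[OF assms(2,3)
      integrable_continuous_interval[OF assms(1)]] by simp

lemma square_telescoping:
  fixes f :: "nat \<Rightarrow> real"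
  shows "(f n)^2 - (f 0)^2 = (\<Sum>k<n. 2 * f k * (f (Suc k) - f k) + (f (Suc k) - f k)^2)"
  by (induction n) (auto simp: power2_eq_square algebra_simps)

lemma product_le_quarter: "(x::real) * (1 - x) \<le> 1/4"
proof -
  have "0 \<le> (x - 1/2)^2" by simp
  then show ?thesis by (simp add: power2_eq_square algebra_simps)
qed

text \<open>A [0,1]-valued continuous adapted process X with continuous drift \<beta> bounded by B, for
  which the martingale part M_t = X_t - X_0 - \<integral>_0^t \<beta> and the process
  Q_t = X_t^2 - X_0^2 - \<integral>_0^t (X (1 - X) + 2 X \<beta>) are martingales; so X is a Wright-Fisher type
  diffusion with diffusion coefficient X (1 - X), observed up to the time horizon T.\<close>
locale bounded_coordinate_process = prob_space M
  for M :: "'a measure" +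
  fixes F :: "real \<Rightarrow> 'a measure" and X \<beta> :: "real \<Rightarrow> 'a \<Rightarrow> real" and T B :: real
  assumes filtration: "is_filtration M F"
    and T_pos: "0 < T" and B_nonneg: "0 \<le> B"
    and X_cont: "\<And>\<omega>. \<omega> \<in> space M \<Longrightarrow> continuous_on {0..} (\<lambda>t. X t \<omega>)"
    and \<beta>_cont: "\<And>\<omega>. \<omega> \<in> space M \<Longrightarrow> continuous_on {0..} (\<lambda>t. \<beta> t \<omega>)"
    and X_range: "\<And>\<omega> t. \<omega> \<in> space M \<Longrightarrow> 0 \<le> t \<Longrightarrow> 0 \<le> X t \<omega> \<and> X t \<omega> \<le> 1"
    and \<beta>_bound: "\<And>\<omega> t. \<omega> \<in> space M \<Longrightarrow> 0 \<le> t \<Longrightarrow> \<bar>\<beta> t \<omega>\<bar> \<le> B"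
    and X_adapted: "\<And>t. 0 \<le> t \<Longrightarrow> X t \<in> borel_measurable (F t)"
    and drift_martingale: "martingale_on M F (\<lambda>t \<omega>. X t \<omega> - X 0 \<omega> - integral {0..t} (\<lambda>s. \<beta> s \<omega>))"
    and square_martingale: "martingale_on M F (\<lambda>t \<omega>. (X t \<omega>)^2 - (X 0 \<omega>)^2
           - integral {0..t} (\<lambda>s. X s \<omega> * (1 - X s \<omega>) + 2 * X s \<omega> * \<beta> s \<omega>))"
begin

definition mart :: "real \<Rightarrow> 'a \<Rightarrow> real" where
  "mart t \<omega> = X t \<omega> - X 0 \<omega> - integral {0..t} (\<lambda>s. \<beta> s \<omega>)"

definition sq_mart :: "real \<Rightarrow> 'a \<Rightarrow> real" where
  "sq_mart t \<omega> = (X t \<omega>)^2 - (X 0 \<omega>)^2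
     - integral {0..t} (\<lambda>s. X s \<omega> * (1 - X s \<omega>) + 2 * X s \<omega> * \<beta> s \<omega>)"

lemma mart_martingale: "martingale_on M F mart"
  using drift_martingale by (simp add: mart_def[abs_def])

lemma sq_mart_martingale: "martingale_on M F sq_mart"
  using square_martingale by (simp add: sq_mart_def[abs_def])

lemma X_cont_interval: "\<omega> \<in> space M \<Longrightarrow> 0 \<le> a \<Longrightarrow> continuous_on {a..b} (\<lambda>t. X t \<omega>)"
  using continuous_on_subset[OF X_cont] by auto

lemma \<beta>_cont_interval: "\<omega> \<in> space M \<Longrightarrow> 0 \<le> a \<Longrightarrow> continuous_on {a..b} (\<lambda>t. \<beta> t \<omega>)"
  using continuous_on_subset[OF \<beta>_cont] by auto

lemma mart_zero [simp]: "mart 0 \<omega> = 0"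
  by (simp add: mart_def)

lemma mart_bound:
  assumes "\<omega> \<in> space M" "0 \<le> t"
  shows "\<bar>mart t \<omega>\<bar> \<le> 1 + B * t"
proof -
  have "\<bar>integral {0..t} (\<lambda>s. \<beta> s \<omega>)\<bar> \<le> B * (t - 0)"
    using integral_bound[OF assms(2) \<beta>_cont_interval[OF assms(1) order_refl]] \<beta>_bound[OF assms(1)]
    by auto
  moreover have "\<bar>X t \<omega> - X 0 \<omega>\<bar> \<le> 1"
    using X_range[OF assms(1), of t] X_range[OF assms(1), of 0] assms(2) by auto
  ultimately show ?thesis unfolding mart_def by simp
qed

lemma mart_bound_le_horizon:
  assumes "\<omega> \<in> space M" "0 \<le> t" "t \<le> T"
  shows "\<bar>mart t \<omega>\<bar> \<le> 1 + B * T"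
  using mart_bound[OF assms(1,2)] mult_left_mono[OF assms(3) B_nonneg] by simp

definition increment :: "(real \<Rightarrow> 'a \<Rightarrow> real) \<Rightarrow> nat \<Rightarrow> nat \<Rightarrow> 'a \<Rightarrow> real" where
  "increment f n k \<omega> = f (grid T n (Suc k)) \<omega> - f (grid T n k) \<omega>"

lemma increment_mean_zero:
  assumes f: "martingale_on M F f" and h: "h \<in> borel_measurable (F (grid T n k))"
    and hb: "\<And>\<omega>. \<omega> \<in> space M \<Longrightarrow> \<bar>h \<omega>\<bar> \<le> C"
  shows "integrable M (\<lambda>\<omega>. h \<omega> * increment f n k \<omega>)"
    and "(\<integral>\<omega>. h \<omega> * increment f n k \<omega> \<partial>M) = 0"
proof -
  have T0: "0 \<le> T" using T_pos by simp
  have "integrable M (increment f n k)"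
    using f grid_nonneg[OF T0] unfolding martingale_on_def increment_def[abs_def] by auto
  then show "integrable M (\<lambda>\<omega>. h \<omega> * increment f n k \<omega>)"
    by (rule integrable_bounded_times[OF _ filtration_measurable[OF filtration h] hb])
  show "(\<integral>\<omega>. h \<omega> * increment f n k \<omega> \<partial>M) = 0"
    unfolding increment_def
    by (rule martingale_increment_orthogonal[OF prob_space_axioms filtration f grid_nonneg[OF T0]
          grid_mono[OF T0] h hb]) simp
qed

text \<open>Discrete approximation of the quadratic variation of M: the sum over the grid cells of
  (\<Delta>M)^2 - \<Delta>Q + 2 X \<Delta>M.  Each summand is close to \<integral> X (1 - X) over the cell.\<close>
definition grid_defect :: "nat \<Rightarrow> 'a \<Rightarrow> real" where
  "grid_defect n \<omega> = (\<Sum>k<n. (increment mart n k \<omega>)^2 - increment sq_mart n k \<omega>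
                                 + 2 * X (grid T n k) \<omega> * increment mart n k \<omega>)"

lemma grid_defect_eq:
  assumes "0 < n"
  shows "grid_defect n \<omega> = (mart T \<omega>)^2
     - (\<Sum>k<n. 2 * mart (grid T n k) \<omega> * increment mart n k \<omega> + increment sq_mart n k \<omega>
               - 2 * X (grid T n k) \<omega> * increment mart n k \<omega>)"
proof -
  have "(mart T \<omega>)^2 = (\<Sum>k<n. 2 * mart (grid T n k) \<omega> * increment mart n k \<omega> + (increment mart n k \<omega>)^2)"
    using square_telescoping[of "\<lambda>k. mart (grid T n k) \<omega>" n] grid_last[OF assms]
    by (simp add: increment_def)
  then show ?thesis unfolding grid_defect_def by (simp add: sum_subtractf[symmetric] algebra_simps)
qed

text \<open>By orthogonality of martingale increments, E (M_T)^2 = E (grid_defect n) for every n.\<close>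
lemma grid_defect_expectation:
  assumes n: "0 < n"
  shows "integrable M (grid_defect n)" and "(\<integral>\<omega>. (mart T \<omega>)^2 \<partial>M) = (\<integral>\<omega>. grid_defect n \<omega> \<partial>M)"
proof -
  have T0: "0 \<le> T" using T_pos by simp
  define summand where "summand k \<omega> = 2 * (mart (grid T n k) \<omega> * increment mart n k \<omega>)
     + increment sq_mart n k \<omega> - 2 * (X (grid T n k) \<omega> * increment mart n k \<omega>)" for k \<omega>
  have mart_F: "mart (grid T n k) \<in> borel_measurable (F (grid T n k))" for k
    using mart_martingale grid_nonneg[OF T0] unfolding martingale_on_def by blast
  have X_bd: "\<bar>X (grid T n k) \<omega>\<bar> \<le> 1" if "\<omega> \<in> space M" for \<omega> k
    using X_range[OF that grid_nonneg[OF T0]] by auto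
  have summand: "integrable M (summand k)" "(\<integral>\<omega>. summand k \<omega> \<partial>M) = 0" if k: "k < n" for k
  proof -
    have "\<bar>mart (grid T n k) \<omega>\<bar> \<le> 1 + B * T" if "\<omega> \<in> space M" for \<omega>
      using mart_bound_le_horizon[OF that grid_nonneg[OF T0] grid_le[OF T0]] k by simp
    note m1 = increment_mean_zero[OF mart_martingale mart_F this]
    note m2 = increment_mean_zero[OF mart_martingale X_adapted[OF grid_nonneg[OF T0]] X_bd]
    note m3 = increment_mean_zero[OF sq_mart_martingale, of "\<lambda>_. 1" n k 1]
    show "integrable M (summand k)" "(\<integral>\<omega>. summand k \<omega> \<partial>M) = 0"
      using m1 m2 m3 by (simp_all add: summand_def[abs_def])
  qed
  have "integrable M (\<lambda>\<omega>. \<Sum>k<n. summand k \<omega>)"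
    by (rule Bochner_Integration.integrable_sum) (use summand(1) in simp)
  moreover have "(\<integral>\<omega>. (\<Sum>k<n. summand k \<omega>) \<partial>M) = 0"
    by (subst Bochner_Integration.integral_sum) (use summand in auto)
  moreover have "integrable M (\<lambda>\<omega>. (mart T \<omega>)^2)"
    by (rule integrable_bounded_real[of _ "(1 + B * T) * (1 + B * T)"])
       (use martingale_measurable[OF mart_martingale filtration T0] mart_bound T0 abs_square_le in auto)
  moreover have "grid_defect n = (\<lambda>\<omega>. (mart T \<omega>)^2 - (\<Sum>k<n. summand k \<omega>))"
    using grid_defect_eq[OF n] by (auto simp: summand_def mult.assoc)
  ultimately show "integrable M (grid_defect n)"
    and "(\<integral>\<omega>. (mart T \<omega>)^2 \<partial>M) = (\<integral>\<omega>. grid_defect n \<omega> \<partial>M)" by simp_all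
qed

lemma quadratic_integrand_cont:
  "\<omega> \<in> space M \<Longrightarrow> 0 \<le> a \<Longrightarrow>
     continuous_on {a..b} (\<lambda>s. X s \<omega> * (1 - X s \<omega>) + 2 * X s \<omega> * \<beta> s \<omega>)"
  using X_cont_interval \<beta>_cont_interval by (intro continuous_intros) auto

text \<open>One cell [t, t + \<Delta>] of the grid defect: if X oscillates by at most \<epsilon> on the cell, the
  summand is at most \<Delta> (1/4 + 2 \<epsilon> B) + \<Delta>^2 B^2.  Indeed it equals
  \<integral> (X (1 - X) + 2 (X - X_{t+\<Delta>}) \<beta>) + (\<integral> \<beta>)^2 over the cell.\<close>
lemma cell_defect_bound:
  assumes om: "\<omega> \<in> space M" and t0: "0 \<le> t" and D: "0 < \<Delta>" and ep: "0 \<le> \<epsilon>"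
    and osc: "\<And>s. s \<in> {t..t + \<Delta>} \<Longrightarrow> \<bar>X s \<omega> - X (t + \<Delta>) \<omega>\<bar> \<le> \<epsilon>"
  shows "(mart (t + \<Delta>) \<omega> - mart t \<omega>)^2 - (sq_mart (t + \<Delta>) \<omega> - sq_mart t \<omega>)
           + 2 * X t \<omega> * (mart (t + \<Delta>) \<omega> - mart t \<omega>) \<le> \<Delta> * (1/4 + 2 * \<epsilon> * B) + \<Delta>^2 * B^2"
proof -
  define t' where "t' = t + \<Delta>"
  have tt': "t \<le> t'" using D by (simp add: t'_def)
  define I where "I = integral {t..t'} (\<lambda>s. \<beta> s \<omega>)"
  define J where "J = integral {t..t'} (\<lambda>s. X s \<omega> * (1 - X s \<omega>) + 2 * X s \<omega> * \<beta> s \<omega>)"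
  define a where "a = X t \<omega>"
  define a' where "a' = X t' \<omega>"
  have dM: "mart t' \<omega> - mart t \<omega> = a' - a - I"
    unfolding mart_def a_def a'_def I_def
    using integral_split[OF \<beta>_cont_interval[OF om order_refl] t0 tt'] by simp
  have dQ: "sq_mart t' \<omega> - sq_mart t \<omega> = a'^2 - a^2 - J"
    unfolding sq_mart_def a_def a'_def J_def
    using integral_split[OF quadratic_integrand_cont[OF om order_refl] t0 tt'] by simp
  have "\<bar>I\<bar> \<le> B * \<Delta>"
    using integral_bound[OF tt' \<beta>_cont_interval[OF om t0]] \<beta>_bound[OF om] t0
    unfolding I_def t'_def by auto
  then have I2: "I^2 \<le> \<Delta>^2 * B^2"
    using power_mono[of "\<bar>I\<bar>" "B * \<Delta>" 2] by (simp add: power_mult_distrib mult.commute)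
  have JI: "J - 2 * a' * I = integral {t..t'} (\<lambda>s. X s \<omega> * (1 - X s \<omega>) + 2 * (X s \<omega> - a') * \<beta> s \<omega>)"
  proof -
    have "J - 2 * a' * I = integral {t..t'} (\<lambda>s. X s \<omega> * (1 - X s \<omega>) + 2 * X s \<omega> * \<beta> s \<omega>
                                               - 2 * a' * \<beta> s \<omega>)"
      unfolding J_def I_def
      using integral_diff[OF integrable_continuous_interval[OF quadratic_integrand_cont[OF om t0]]
          integrable_on_mult_right[OF integrable_continuous_interval[OF \<beta>_cont_interval[OF om t0]]]]
      by simp
    then show ?thesis by (simp add: algebra_simps)
  qed
  have "J - 2 * a' * I \<le> (t' - t) * (1/4 + 2 * \<epsilon> * B)" unfolding JI
  proof (rule integral_le_length_times[OF _ tt'])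
    show "continuous_on {t..t'} (\<lambda>s. X s \<omega> * (1 - X s \<omega>) + 2 * (X s \<omega> - a') * \<beta> s \<omega>)"
      using X_cont_interval[OF om t0] \<beta>_cont_interval[OF om t0] by (intro continuous_intros) auto
    fix s assume s: "s \<in> {t..t'}"
    have "\<bar>X s \<omega> - a'\<bar> * \<bar>\<beta> s \<omega>\<bar> \<le> \<epsilon> * B"
      using osc[of s] s \<beta>_bound[OF om, of s] t0 ep unfolding a'_def t'_def
      by (intro mult_mono) auto
    moreover have "\<bar>2 * (X s \<omega> - a') * \<beta> s \<omega>\<bar> = 2 * (\<bar>X s \<omega> - a'\<bar> * \<bar>\<beta> s \<omega>\<bar>)"
      by (simp only: abs_mult abs_numeral mult.assoc)
    ultimately have "\<bar>2 * (X s \<omega> - a') * \<beta> s \<omega>\<bar> \<le> 2 * (\<epsilon> * B)" by linarith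
    then show "X s \<omega> * (1 - X s \<omega>) + 2 * (X s \<omega> - a') * \<beta> s \<omega> \<le> 1/4 + 2 * \<epsilon> * B"
      using product_le_quarter[of "X s \<omega>"] by linarith
  qed
  moreover have "(mart t' \<omega> - mart t \<omega>)^2 - (sq_mart t' \<omega> - sq_mart t \<omega>)
      + 2 * X t \<omega> * (mart t' \<omega> - mart t \<omega>) = (J - 2 * a' * I) + I^2"
    unfolding dM dQ a_def[symmetric] by (simp add: power2_eq_square algebra_simps)
  ultimately show ?thesis using I2 by (simp add: t'_def)
qed

lemma grid_defect_bound:
  assumes om: "\<omega> \<in> space M" and n: "0 < n" and ep: "0 \<le> \<epsilon>"
    and osc: "\<And>s u. s \<in> {0..T} \<Longrightarrow> u \<in> {0..T} \<Longrightarrow> \<bar>s - u\<bar> \<le> T / real n \<Longrightarrow> \<bar>X s \<omega> - X u \<omega>\<bar> \<le> \<epsilon>"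
  shows "grid_defect n \<omega> \<le> T/4 + 2 * \<epsilon> * B * T + B^2 * T^2 / real n"
proof -
  have T0: "0 \<le> T" using T_pos by simp
  have D: "0 < T / real n" using T_pos n by simp
  have "grid_defect n \<omega> \<le> (\<Sum>k<n. T / real n * (1/4 + 2 * \<epsilon> * B) + (T / real n)^2 * B^2)"
    unfolding grid_defect_def increment_def grid_Suc
  proof (rule sum_mono)
    fix k assume "k \<in> {..<n}"
    then have top: "grid T n k + T / real n \<le> T" using grid_le[OF T0, of "Suc k" n] grid_Suc by simp
    show "(mart (grid T n k + T / real n) \<omega> - mart (grid T n k) \<omega>)^2
          - (sq_mart (grid T n k + T / real n) \<omega> - sq_mart (grid T n k) \<omega>)
          + 2 * X (grid T n k) \<omega> * (mart (grid T n k + T / real n) \<omega> - mart (grid T n k) \<omega>)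
          \<le> T / real n * (1/4 + 2 * \<epsilon> * B) + (T / real n)^2 * B^2"
    proof (rule cell_defect_bound[OF om grid_nonneg[OF T0] D ep])
      fix s assume "s \<in> {grid T n k..grid T n k + T / real n}"
      then show "\<bar>X s \<omega> - X (grid T n k + T / real n) \<omega>\<bar> \<le> \<epsilon>"
        using osc[of s "grid T n k + T / real n"] grid_nonneg[OF T0, of n k] top D by auto
    qed
  qed
  also have "\<dots> = T/4 + 2 * \<epsilon> * B * T + B^2 * T^2 / real n"
    using n by (simp add: power2_eq_square field_simps)
  finally show ?thesis .
qed

lemma grid_defect_le:
  assumes om: "\<omega> \<in> space M" and n: "0 < n"
  shows "grid_defect n \<omega> \<le> T/4 + 2 * B * T + B^2 * T^2"
proof -
  have "grid_defect n \<omega> \<le> T/4 + 2 * 1 * B * T + B^2 * T^2 / real n"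
  proof (rule grid_defect_bound[OF om n])
    fix s u assume "s \<in> {0..T}" "u \<in> {0..T}"
    then show "\<bar>X s \<omega> - X u \<omega>\<bar> \<le> 1" using X_range[OF om, of s] X_range[OF om, of u] by auto
  qed simp
  moreover have "B^2 * T^2 / real n \<le> B^2 * T^2 / 1"
    by (rule divide_left_mono) (use n in auto)
  ultimately show ?thesis by simp
qed

text \<open>Pathwise, by uniform continuity of X on [0,T], limsup_n grid_defect n \<le> T/4.\<close>
lemma grid_defect_eventually_le:
  assumes om: "\<omega> \<in> space M" and eta: "0 < \<eta>"
  shows "eventually (\<lambda>n. grid_defect n \<omega> \<le> T/4 + \<eta>) sequentially"
proof -
  define \<epsilon> where "\<epsilon> = \<eta> / (4 * (B * T + 1))"
  have BT: "0 \<le> B * T" using B_nonneg T_pos by simp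
  have ep: "0 < \<epsilon>" using eta BT by (simp add: \<epsilon>_def)
  have ep2: "2 * \<epsilon> * B * T \<le> \<eta> / 2"
    using eta BT by (simp add: \<epsilon>_def field_simps)
  have "uniformly_continuous_on {0..T} (\<lambda>t. X t \<omega>)"
    by (rule compact_uniformly_continuous[OF X_cont_interval[OF om order_refl]]) simp
  then obtain \<delta> where d: "0 < \<delta>"
    and dd: "\<And>s u. s \<in> {0..T} \<Longrightarrow> u \<in> {0..T} \<Longrightarrow> dist u s < \<delta> \<Longrightarrow> dist (X u \<omega>) (X s \<omega>) < \<epsilon>"
    unfolding uniformly_continuous_on_def using ep by metis
  have "eventually (\<lambda>n. T / real n < \<delta>) sequentially"
    using order_tendstoD(2)[OF lim_const_over_n d] .
  moreover have "eventually (\<lambda>n. B^2 * T^2 / real n < \<eta> / 2) sequentially"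
    using order_tendstoD(2)[OF lim_const_over_n, of "\<eta> / 2"] eta by simp
  moreover have "eventually (\<lambda>n. 0 < n) sequentially" by (rule eventually_gt_at_top)
  ultimately show ?thesis
  proof eventually_elim
    case (elim n)
    have "grid_defect n \<omega> \<le> T/4 + 2 * \<epsilon> * B * T + B^2 * T^2 / real n"
    proof (rule grid_defect_bound[OF om elim(3)])
      fix s u assume "s \<in> {0..T}" "u \<in> {0..T}" "\<bar>s - u\<bar> \<le> T / real n"
      then show "\<bar>X s \<omega> - X u \<omega>\<bar> \<le> \<epsilon>"
        using dd[of u s] elim(1) by (auto simp: dist_real_def)
    qed (use ep in simp)
    then show ?case using ep2 elim(2) by simp
  qed
qed

text \<open>The quadratic variation bound: E (M_T)^2 \<le> T/4.  Since E (M_T)^2 = E (grid_defect n)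
  for all n and grid_defect n is bounded above uniformly, Fatou's lemma applied to
  C - grid_defect n turns the pathwise limsup bound into the bound in expectation.\<close>
lemma mart_second_moment: "(\<integral>\<omega>. (mart T \<omega>)^2 \<partial>M) \<le> T / 4"
proof -
  define C where "C = T/4 + 2 * B * T + B^2 * T^2"
  define E where "E = (\<integral>\<omega>. (mart T \<omega>)^2 \<partial>M)"
  define g where "g n \<omega> = ennreal (C - grid_defect (Suc n) \<omega>)" for n \<omega>
  have int: "integrable M (grid_defect (Suc n))" and E_eq: "E = (\<integral>\<omega>. grid_defect (Suc n) \<omega> \<partial>M)" for n
    using grid_defect_expectation[of "Suc n"] by (simp_all add: E_def)
  have le_C: "grid_defect (Suc n) \<omega> \<le> C" if "\<omega> \<in> space M" for n \<omega>
    using grid_defect_le[OF that] by (simp add: C_def)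
  have EC: "E \<le> C"
    using integral_mono[OF int[of 0] _ le_C] E_eq[of 0] by (simp add: prob_space)
  have g_int: "integral\<^sup>N M (g n) = ennreal (C - E)" for n
  proof -
    have "integral\<^sup>N M (g n) = ennreal (\<integral>\<omega>. C - grid_defect (Suc n) \<omega> \<partial>M)"
      unfolding g_def
      by (rule nn_integral_eq_integral) (use int in simp, rule AE_I2, use le_C in simp)
    then show ?thesis using int[of n] E_eq[of n] by (simp add: prob_space)
  qed
  have pointwise: "ennreal (C - T/4) \<le> liminf (\<lambda>n. g n \<omega>)" if om: "\<omega> \<in> space M" for \<omega>
  proof (subst le_Liminf_iff, intro allI impI)
    fix y assume y: "y < ennreal (C - T/4)"
    obtain r where r: "y = ennreal r" "0 \<le> r" using y by (cases y rule: ennreal_cases) auto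
    have rC: "0 < C - T/4 - r" using y r by (simp add: ennreal_less_iff)
    have "eventually (\<lambda>n. grid_defect n \<omega> \<le> T/4 + (C - T/4 - r) / 2) sequentially"
      using grid_defect_eventually_le[OF om, of "(C - T/4 - r) / 2"] rC by simp
    then have "eventually (\<lambda>n. grid_defect (Suc n) \<omega> \<le> T/4 + (C - T/4 - r) / 2) sequentially"
      by (rule eventually_sequentially_Suc[THEN iffD2])
    then show "eventually (\<lambda>n. y < g n \<omega>) sequentially"
    proof eventually_elim
      case (elim n)
      then have "r < C - grid_defect (Suc n) \<omega>" using rC by (simp add: field_simps)
      then show ?case using r by (simp add: g_def ennreal_less_iff)
    qed
  qed
  have "ennreal (C - T/4) = (\<integral>\<^sup>+\<omega>. ennreal (C - T/4) \<partial>M)"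
    by (simp add: emeasure_space_1)
  also have "\<dots> \<le> (\<integral>\<^sup>+\<omega>. liminf (\<lambda>n. g n \<omega>) \<partial>M)"
    by (rule nn_integral_mono) (use pointwise in auto)
  also have "\<dots> \<le> liminf (\<lambda>n. integral\<^sup>N M (g n))"
    by (rule nn_integral_liminf) (use int in \<open>auto simp: g_def\<close>)
  also have "\<dots> = ennreal (C - E)" by (simp add: g_int Liminf_const)
  finally have "C - T/4 \<le> C - E" using EC by simp
  then show ?thesis by (simp add: E_def)
qed

lemma grid_max_mart_bound:
  assumes "\<omega> \<in> space M"
  shows "\<bar>grid_max T (\<lambda>t. mart t \<omega>) n\<bar> \<le> 1 + B * T"
proof -
  have T0: "0 \<le> T" using T_pos by simp
  have "running_max (\<lambda>k. mart (grid T n k) \<omega>) n \<le> 1 + B * T"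
    by (rule running_max_le)
       (use mart_bound_le_horizon[OF assms grid_nonneg[OF T0] grid_le[OF T0]] in simp)
  then show ?thesis using running_max_nonneg by (simp add: grid_max_def)
qed

lemma grid_max_mart_measurable: "(\<lambda>\<omega>. grid_max T (\<lambda>t. mart t \<omega>) n) \<in> borel_measurable M"
  unfolding grid_max_def
  by (rule running_max_measurable)
     (use martingale_measurable[OF mart_martingale filtration] grid_nonneg T_pos in auto)

lemma grid_max_square_integrable: "integrable M (\<lambda>\<omega>. (grid_max T (\<lambda>t. mart t \<omega>) n)^2)"
  by (rule integrable_bounded_real[of _ "(1 + B * T) * (1 + B * T)"])
     (use grid_max_mart_measurable grid_max_mart_bound abs_square_le in auto)

lemma grid_max_second_moment:
  assumes "0 < n"
  shows "(\<integral>\<omega>. (grid_max T (\<lambda>t. mart t \<omega>) n)^2 \<partial>M) \<le> T"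
proof -
  have "(\<integral>\<omega>. (grid_max T (\<lambda>t. mart t \<omega>) n)^2 \<partial>M) \<le> 4 * (\<integral>\<omega>. (mart T \<omega>)^2 \<partial>M)"
  proof (rule doob_L2_grid[OF prob_space_axioms filtration mart_martingale _ assms])
    show "\<bar>mart t \<omega>\<bar> \<le> 1 + B * T" if "\<omega> \<in> space M" "0 \<le> t" "t \<le> T" for t \<omega>
      using mart_bound_le_horizon[OF that] .
  qed (use T_pos in simp)
  then show ?thesis using mart_second_moment by simp
qed

end


section \<open>The drift of the model and the martingale problem\<close>

definition drift :: "nat \<Rightarrow> real \<Rightarrow> (real \<times> real \<Rightarrow> real) \<Rightarrow> real \<times> real \<Rightarrow> real" where
  "drift N \<mu> c z = 2 * real N * (1 - c z) * (\<mu> - (fst z)^2 * (snd z)^2)"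

lemma coordinate_continuous:
  "c \<in> {fst, snd} \<Longrightarrow> continuous_on S f \<Longrightarrow> continuous_on S (\<lambda>s. c (f s))"
  by (auto intro: continuous_on_fst continuous_on_snd)

lemma drift_continuous:
  assumes "c \<in> {fst, snd}" "continuous_on S f"
  shows "continuous_on S (\<lambda>s. drift N \<mu> c (f s))"
  unfolding drift_def using coordinate_continuous[OF assms] assms(2)
  by (intro continuous_intros)

lemma coordinate_range: "c \<in> {fst, snd} \<Longrightarrow> z \<in> {0..1} \<times> {0..1} \<Longrightarrow> 0 \<le> c z \<and> c z \<le> 1"
  by (auto simp: mem_Times_iff)

lemma selection_factor_bound:
  fixes \<mu> :: real
  assumes mu: "0 < \<mu>" "\<mu> < 1" and z: "z \<in> {0..1} \<times> {0..1}"
  shows "\<bar>\<mu> - (fst z)^2 * (snd z)^2\<bar> \<le> 1"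
proof -
  have "0 \<le> fst z" "fst z \<le> 1" "0 \<le> snd z" "snd z \<le> 1" using z by (auto simp: mem_Times_iff)
  then have "(fst z)^2 \<le> 1" "(snd z)^2 \<le> 1" using power_le_one by auto
  then have "(fst z)^2 * (snd z)^2 \<le> 1" by (intro mult_le_one) auto
  moreover have "0 \<le> (fst z)^2 * (snd z)^2" by simp
  ultimately show ?thesis using mu unfolding abs_le_iff by linarith
qed

lemma drift_bound:
  assumes mu: "0 < \<mu>" "\<mu> < 1" and c: "c \<in> {fst, snd}" and z: "z \<in> {0..1} \<times> {0..1}"
  shows "\<bar>drift N \<mu> c z\<bar> \<le> 2 * real N"
proof -
  have "\<bar>(1 - c z) * (\<mu> - (fst z)^2 * (snd z)^2)\<bar> \<le> 1 * 1"
    unfolding abs_mult using coordinate_range[OF c z] selection_factor_bound[OF mu z]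
    by (intro mult_mono) auto
  then show ?thesis unfolding drift_def by (simp add: abs_mult mult.assoc mult_left_le)
qed

lemma square_product_lipschitz:
  fixes a b c d :: real
  assumes "0 \<le> a" "a \<le> 1" "0 \<le> b" "b \<le> 1" "0 \<le> c" "c \<le> 1" "0 \<le> d" "d \<le> 1"
  shows "\<bar>a^2 * b^2 - c^2 * d^2\<bar> \<le> 2 * \<bar>a - c\<bar> + 2 * \<bar>b - d\<bar>"
proof -
  have e: "a^2 * b^2 - c^2 * d^2 = (a - c) * ((a + c) * b^2) + (b - d) * ((b + d) * c^2)"
    by (simp add: power2_eq_square algebra_simps)
  have "b^2 \<le> 1" "c^2 \<le> 1" using assms by (simp_all add: power_le_one)
  then have "\<bar>(a + c) * b^2\<bar> \<le> 2" "\<bar>(b + d) * c^2\<bar> \<le> 2"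
    using assms mult_mono[of "a + c" 2 "b^2" 1] mult_mono[of "b + d" 2 "c^2" 1] by auto
  then have "\<bar>(a - c) * ((a + c) * b^2)\<bar> \<le> \<bar>a - c\<bar> * 2" "\<bar>(b - d) * ((b + d) * c^2)\<bar> \<le> \<bar>b - d\<bar> * 2"
    unfolding abs_mult by (simp_all add: mult_left_mono)
  then show ?thesis unfolding e
    using abs_triangle_ineq[of "(a - c) * ((a + c) * b^2)" "(b - d) * ((b + d) * c^2)"] by linarith
qed

lemma drift_lipschitz:
  assumes mu: "0 < \<mu>" "\<mu> < 1" and c: "c \<in> {fst, snd}"
    and z: "z \<in> {0..1} \<times> {0..1}" and z': "z' \<in> {0..1} \<times> {0..1}"
  shows "\<bar>drift N \<mu> c z - drift N \<mu> c z'\<bar> \<le> 6 * real N * (\<bar>fst z - fst z'\<bar> + \<bar>snd z - snd z'\<bar>)"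
proof -
  define d where "d = \<bar>fst z - fst z'\<bar> + \<bar>snd z - snd z'\<bar>"
  define p where "p = (fst z)^2 * (snd z)^2"
  define q where "q = (fst z')^2 * (snd z')^2"
  have cd: "\<bar>c z - c z'\<bar> \<le> d" using c by (auto simp: d_def)
  have pq: "\<bar>p - q\<bar> \<le> 2 * d"
    using square_product_lipschitz[of "fst z" "snd z" "fst z'" "snd z'"] z z'
    by (auto simp: p_def q_def d_def mem_Times_iff)
  have mp: "\<bar>\<mu> - p\<bar> \<le> 1" unfolding p_def by (rule selection_factor_bound[OF mu z])
  have "(1 - c z) * (\<mu> - p) - (1 - c z') * (\<mu> - q) = (c z' - c z) * (\<mu> - p) + (1 - c z') * (q - p)"
    by (simp add: algebra_simps)
  moreover have "\<bar>(c z' - c z) * (\<mu> - p)\<bar> \<le> \<bar>c z - c z'\<bar>"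
    using mp by (simp add: abs_mult abs_minus_commute mult_left_le)
  moreover have "\<bar>(1 - c z') * (q - p)\<bar> \<le> \<bar>p - q\<bar>"
    using coordinate_range[OF c z'] by (simp add: abs_mult abs_minus_commute mult_left_le_one_le)
  ultimately have factor: "\<bar>(1 - c z) * (\<mu> - p) - (1 - c z') * (\<mu> - q)\<bar> \<le> 3 * d"
    using cd pq abs_triangle_ineq[of "(c z' - c z) * (\<mu> - p)" "(1 - c z') * (q - p)"] by linarith
  have "drift N \<mu> c z - drift N \<mu> c z' = 2 * real N * ((1 - c z) * (\<mu> - p) - (1 - c z') * (\<mu> - q))"
    by (simp add: drift_def p_def q_def algebra_simps)
  then have "\<bar>drift N \<mu> c z - drift N \<mu> c z'\<bar> = 2 * real N * \<bar>(1 - c z) * (\<mu> - p) - (1 - c z') * (\<mu> - q)\<bar>"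
    by (simp add: abs_mult)
  also have "\<dots> \<le> 2 * real N * (3 * d)" by (rule mult_left_mono[OF factor]) simp
  finally show ?thesis by (simp add: d_def algebra_simps)
qed

lemma mp_martingale:
  assumes "solves_mp_L1 N \<mu> M F Z z0" "C2_partials f fx fy fxx fxy fyy"
  shows "martingale_on M F (\<lambda>t \<omega>. f (Z t \<omega>) - f (Z 0 \<omega>)
                                   - integral {0..t} (\<lambda>s. L1 N \<mu> fx fy fxx fyy (Z s \<omega>)))"
  using assms unfolding solves_mp_L1_def martingale_on_def Let_def by blast

lemma C2_fst: "C2_partials fst (\<lambda>_. 1) (\<lambda>_. 0) (\<lambda>_. 0) (\<lambda>_. 0) (\<lambda>_. 0)"
  and C2_snd: "C2_partials snd (\<lambda>_. 0) (\<lambda>_. 1) (\<lambda>_. 0) (\<lambda>_. 0) (\<lambda>_. 0)"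
  and C2_fst_sq: "C2_partials (\<lambda>z. (fst z)^2) (\<lambda>z. 2 * fst z) (\<lambda>_. 0) (\<lambda>_. 2) (\<lambda>_. 0) (\<lambda>_. 0)"
  and C2_snd_sq: "C2_partials (\<lambda>z. (snd z)^2) (\<lambda>_. 0) (\<lambda>z. 2 * snd z) (\<lambda>_. 0) (\<lambda>_. 0) (\<lambda>_. 2)"
  unfolding C2_partials_def by (auto intro!: derivative_eq_intros continuous_intros)

lemma L1_fst: "L1 N \<mu> (\<lambda>_. 1) (\<lambda>_. 0) (\<lambda>_. 0) (\<lambda>_. 0) = drift N \<mu> fst"
  and L1_snd: "L1 N \<mu> (\<lambda>_. 0) (\<lambda>_. 1) (\<lambda>_. 0) (\<lambda>_. 0) = drift N \<mu> snd"
  and L1_fst_sq: "L1 N \<mu> (\<lambda>z. 2 * fst z) (\<lambda>_. 0) (\<lambda>_. 2) (\<lambda>_. 0)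
                    = (\<lambda>z. fst z * (1 - fst z) + 2 * fst z * drift N \<mu> fst z)"
  and L1_snd_sq: "L1 N \<mu> (\<lambda>_. 0) (\<lambda>z. 2 * snd z) (\<lambda>_. 0) (\<lambda>_. 2)
                    = (\<lambda>z. snd z * (1 - snd z) + 2 * snd z * drift N \<mu> snd z)"
  by (simp_all add: fun_eq_iff L1_def drift_def Let_def field_simps)

lemma solution_coordinate_process:
  assumes sol: "solves_mp_L1 N \<mu> M F Z z0" and mu: "0 < \<mu>" "\<mu> < 1"
    and c: "c \<in> {fst, snd}" and T: "0 < T"
  shows "bounded_coordinate_process M F (\<lambda>t \<omega>. c (Z t \<omega>)) (\<lambda>t \<omega>. drift N \<mu> c (Z t \<omega>)) T (2 * real N)"
proof -
  have P: "prob_space M" and Fi: "is_filtration M F"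
    and ZF: "\<And>t. 0 \<le> t \<Longrightarrow> Z t \<in> borel_measurable (F t)"
    and Zc: "\<And>\<omega>. \<omega> \<in> space M \<Longrightarrow> continuous_on {0..} (\<lambda>t. Z t \<omega>)"
    and Zr: "\<And>\<omega> t. \<omega> \<in> space M \<Longrightarrow> 0 \<le> t \<Longrightarrow> Z t \<omega> \<in> {0..1} \<times> {0..1}"
    using sol unfolding solves_mp_L1_def by auto
  have fst_or_snd: "c = fst \<or> c = snd" using c by simp
  have mart: "martingale_on M F (\<lambda>t \<omega>. c (Z t \<omega>) - c (Z 0 \<omega>) - integral {0..t} (\<lambda>s. drift N \<mu> c (Z s \<omega>)))"
    using fst_or_snd
  proof
    assume "c = fst" then show ?thesis using mp_martingale[OF sol C2_fst] by (simp only: L1_fst)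
  next
    assume "c = snd" then show ?thesis using mp_martingale[OF sol C2_snd] by (simp only: L1_snd)
  qed
  have sq_mart: "martingale_on M F (\<lambda>t \<omega>. (c (Z t \<omega>))^2 - (c (Z 0 \<omega>))^2
      - integral {0..t} (\<lambda>s. c (Z s \<omega>) * (1 - c (Z s \<omega>)) + 2 * c (Z s \<omega>) * drift N \<mu> c (Z s \<omega>)))"
    using fst_or_snd
  proof
    assume "c = fst" then show ?thesis using mp_martingale[OF sol C2_fst_sq] by (simp only: L1_fst_sq)
  next
    assume "c = snd" then show ?thesis using mp_martingale[OF sol C2_snd_sq] by (simp only: L1_snd_sq)
  qed
  show ?thesis
  proof (intro bounded_coordinate_process.intro bounded_coordinate_process_axioms.intro)
    show "continuous_on {0..} (\<lambda>t. c (Z t \<omega>))" if "\<omega> \<in> space M" for \<omega>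
      by (rule coordinate_continuous[OF c Zc[OF that]])
    show "continuous_on {0..} (\<lambda>t. drift N \<mu> c (Z t \<omega>))" if "\<omega> \<in> space M" for \<omega>
      by (rule drift_continuous[OF c Zc[OF that]])
    show "(\<lambda>\<omega>. c (Z t \<omega>)) \<in> borel_measurable (F t)" if "0 \<le> t" for t
      by (rule measurable_compose[OF ZF[OF that] borel_measurable_continuous_onI])
         (rule coordinate_continuous[OF c continuous_on_id])
    show "0 \<le> c (Z t \<omega>) \<and> c (Z t \<omega>) \<le> 1" if "\<omega> \<in> space M" "0 \<le> t" for \<omega> t
      by (rule coordinate_range[OF c Zr[OF that]])
    show "\<bar>drift N \<mu> c (Z t \<omega>)\<bar> \<le> 2 * real N" if "\<omega> \<in> space M" "0 \<le> t" for \<omega> t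
      by (rule drift_bound[OF mu c Zr[OF that]])
  qed (use P Fi T mart sq_mart in simp_all)
qed


section \<open>The deterministic system stays in the unit square\<close>

lemma nonneg_preserved:
  fixes \<phi> :: "real \<Rightarrow> real"
  assumes c: "continuous_on {0..} \<phi>" and p0: "0 < \<phi> 0"
    and der: "\<And>s. 0 < s \<Longrightarrow> \<phi> s = 0 \<Longrightarrow> \<exists>l>0. (\<phi> has_real_derivative l) (at s within {0..})"
    and t: "0 \<le> t"
  shows "0 \<le> \<phi> t"
proof (rule ccontr)
  assume neg: "\<not> 0 \<le> \<phi> t"
  define S where "S = {0..t} \<inter> \<phi> -` {0..}"
  have ct: "continuous_on {0..t} \<phi>" using continuous_on_subset[OF c] by auto
  have clS: "closed S" unfolding S_def by (rule continuous_closed_preimage[OF ct]) auto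
  have S0: "0 \<in> S" using p0 t by (simp add: S_def)
  have bS: "bdd_above S" unfolding S_def by (auto intro: bdd_aboveI[of _ t])
  define s where "s = Sup S"
  have sS: "s \<in> S" unfolding s_def by (rule closed_contains_Sup) (use S0 bS clS in auto)
  have s_ub: "r \<in> S \<Longrightarrow> r \<le> s" for r unfolding s_def using bS by (simp add: cSup_upper)
  have s0: "0 \<le> s" "s \<le> t" "0 \<le> \<phi> s" using sS by (auto simp: S_def)
  have st: "s < t" using s0 neg by (metis order_le_less)
  text \<open>s is the last time in [0,t] with \<phi> \<ge> 0; by the intermediate value theorem \<phi> s = 0.\<close>
  obtain r where r: "s \<le> r" "r \<le> t" "\<phi> r = 0"
    using IVT2'[of \<phi> t 0 s] s0 neg continuous_on_subset[OF ct, of "{s..t}"] by auto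
  have "r \<in> S" using r s0 by (simp add: S_def)
  then have phis: "\<phi> s = 0" using s_ub r by force
  have spos: "0 < s" using phis p0 s0 by (metis order_le_less)
  obtain l where l: "0 < l" "(\<phi> has_real_derivative l) (at s within {0..})" using der[OF spos phis] by blast
  have "at s within {0..} = at s"
    by (rule at_within_interior) (use spos in simp)
  then obtain d where d: "0 < d" "\<And>h. 0 < h \<Longrightarrow> h < d \<Longrightarrow> \<phi> s < \<phi> (s + h)"
    using DERIV_pos_inc_right[of \<phi> l s] l by auto
  text \<open>But then \<phi> is still positive slightly after s, contradicting the choice of s.\<close>
  define h where "h = min (d / 2) ((t - s) / 2)"
  have "h \<le> (t - s) / 2" unfolding h_def by (rule min.cobounded2)
  then have h: "0 < h" "h < d" "s + h \<le> t" using d st by (auto simp: h_def)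
  have "s + h \<in> S" using d(2)[OF h(1,2)] phis h s0 by (simp add: S_def)
  then show False using s_ub h by force
qed

text \<open>A solution of \<phi>' = (1 - \<phi>) k with \<phi> 0 < 1 stays below 1: (1 - \<phi>) e^(\<integral> k) is constant.\<close>
lemma below_one_preserved:
  fixes \<phi> k :: "real \<Rightarrow> real"
  assumes der: "\<And>s. 0 \<le> s \<Longrightarrow> (\<phi> has_real_derivative (1 - \<phi> s) * k s) (at s within {0..})"
    and kc: "continuous_on {0..} k" and p0: "\<phi> 0 < 1" and t: "0 \<le> t"
  shows "\<phi> t < 1"
proof -
  define G where "G u = integral {0..u} k" for u
  define h where "h u = (1 - \<phi> u) * exp (G u)" for u
  have kct: "continuous_on {0..t} k" using continuous_on_subset[OF kc] by auto
  have hd: "(h has_real_derivative 0) (at u within {0..t})" if u: "u \<in> {0..t}" for u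
  proof -
    have dG: "(G has_real_derivative k u) (at u within {0..t})"
      unfolding G_def by (rule integral_has_real_derivative[OF kct u])
    have dphi: "(\<phi> has_real_derivative (1 - \<phi> u) * k u) (at u within {0..t})"
      using has_field_derivative_subset[OF der] u by auto
    have "(h has_real_derivative (- ((1 - \<phi> u) * k u)) * exp (G u) + (exp (G u) * k u) * (1 - \<phi> u))
            (at u within {0..t})"
      unfolding h_def
      by (rule DERIV_mult[OF DERIV_diff[OF DERIV_const dphi, simplified] DERIV_chain2[OF DERIV_exp dG]])
    then show ?thesis by (simp add: algebra_simps)
  qed
  have "((\<lambda>_. 0) has_integral (h t - h 0)) {0..t}"
    by (rule fundamental_theorem_of_calculus[OF t])
       (use hd in \<open>auto simp: has_real_derivative_iff_has_vector_derivative\<close>)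
  then have "h t = h 0" using has_integral_unique[OF _ has_integral_0] by force
  then have "0 < (1 - \<phi> t) * exp (G t)" using p0 by (simp add: h_def G_def)
  then show ?thesis by (simp add: zero_less_mult_iff)
qed

lemma integral_form_of_derivative:
  fixes f f' :: "real \<Rightarrow> real"
  assumes d: "\<And>s. 0 \<le> s \<Longrightarrow> (f has_real_derivative f' s) (at s within {0..})" and t: "0 \<le> t"
  shows "f t = f 0 + integral {0..t} f'"
proof -
  have "(f' has_integral (f t - f 0)) {0..t}"
    by (rule fundamental_theorem_of_calculus[OF t])
       (use d in \<open>auto simp: has_real_derivative_iff_has_vector_derivative[symmetric]
                    intro!: has_field_derivative_subset[OF d]\<close>)
  then show ?thesis by (simp add: integral_unique)
qed

lemma ode_continuous: "ode_sol_L1 N \<mu> z0 w \<Longrightarrow> continuous_on {0..} w"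
  unfolding ode_sol_L1_def continuous_on_eq_continuous_within
  using has_vector_derivative_continuous by fastforce

lemma ode_coordinate_derivative:
  assumes ode: "ode_sol_L1 N \<mu> z0 w" and c: "c \<in> {fst, snd}" and t: "0 \<le> t"
  shows "((\<lambda>t. c (w t)) has_real_derivative drift N \<mu> c (w t)) (at t within {0..})"
proof -
  have "(w has_vector_derivative (drift N \<mu> fst (w t), drift N \<mu> snd (w t))) (at t within {0..})"
    using ode t unfolding ode_sol_L1_def drift_def by simp
  from bounded_linear.has_vector_derivative[OF _ this, of c] c
  show ?thesis
    by (auto simp: has_real_derivative_iff_has_vector_derivative bounded_linear_fst bounded_linear_snd)
qed

lemma ode_integral_form:
  assumes "ode_sol_L1 N \<mu> z0 w" "c \<in> {fst, snd}" "0 \<le> t"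
  shows "c (w t) = c (w 0) + integral {0..t} (\<lambda>s. drift N \<mu> c (w s))"
  using integral_form_of_derivative[OF ode_coordinate_derivative[OF assms(1,2)] assms(3)] .

text \<open>Started in the open unit square, the ODE solution stays in the closed unit square:
  a coordinate cannot reach 1 (the drift has the factor 1 - c), and where it vanishes its
  drift equals 2N\<mu> > 0.\<close>
lemma ode_stays_in_square:
  assumes ode: "ode_sol_L1 N \<mu> z0 w" and N: "1 \<le> N" and mu: "0 < \<mu>"
    and z0: "z0 \<in> {0<..<1} \<times> {0<..<1}" and t: "0 \<le> t"
  shows "w t \<in> {0..1} \<times> {0..1}"
proof -
  have wc: "continuous_on {0..} w" by (rule ode_continuous[OF ode])
  have w0: "w 0 = z0" using ode unfolding ode_sol_L1_def by simp
  have coordinate: "0 \<le> c (w t) \<and> c (w t) < 1" if c: "c \<in> {fst, snd}" for c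
  proof
    have der: "((\<lambda>t. c (w t)) has_real_derivative drift N \<mu> c (w s)) (at s within {0..})" if "0 \<le> s" for s
      by (rule ode_coordinate_derivative[OF ode c that])
    have start: "0 < c (w 0)" "c (w 0) < 1" using z0 c w0 by (auto simp: mem_Times_iff)
    show "c (w t) < 1"
    proof (rule below_one_preserved[where \<phi>="\<lambda>s. c (w s)" and k="\<lambda>s. 2 * real N * (\<mu> - (fst (w s))^2 * (snd (w s))^2)",
          OF _ _ start(2) t])
      show "continuous_on {0..} (\<lambda>s. 2 * real N * (\<mu> - (fst (w s))^2 * (snd (w s))^2))"
        using wc by (intro continuous_intros)
    qed (use der in \<open>simp add: drift_def algebra_simps\<close>)
    show "0 \<le> c (w t)"
    proof (rule nonneg_preserved[where \<phi>="\<lambda>s. c (w s)", OF _ start(1) _ t])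
      show "continuous_on {0..} (\<lambda>t. c (w t))" by (rule coordinate_continuous[OF c wc])
      fix s :: real assume s: "0 < s" "c (w s) = 0"
      then have "drift N \<mu> c (w s) = 2 * real N * \<mu>" using c by (auto simp: drift_def)
      then show "\<exists>l>0. ((\<lambda>t. c (w t)) has_real_derivative l) (at s within {0..})"
        using der[of s] s mu N by (intro exI[of _ "2 * real N * \<mu>"]) auto
    qed
  qed
  show ?thesis using coordinate[of fst] coordinate[of snd] by (auto simp: mem_Times_iff)
qed

section \<open>Gronwall's comparison of the diffusion path with the ODE solution\<close>

lemma gronwall:
  fixes u :: "real \<Rightarrow> real"
  assumes uc: "continuous_on {0..T} u" and K: "0 < K"
    and bd: "\<And>t. t \<in> {0..T} \<Longrightarrow> u t \<le> S + K * integral {0..t} u"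
    and t: "t \<in> {0..T}"
  shows "u t \<le> S * exp (K * t)"
proof -
  define V where "V s = integral {0..s} u" for s
  define \<phi> where "\<phi> s = exp (- K * s) * (V s + S / K)" for s
  define \<phi>' where "\<phi>' s = exp (- K * s) * (u s - K * V s - S)" for s
  have t0: "0 \<le> t" "t \<le> T" using t by auto
  have uct: "continuous_on {0..t} u" using continuous_on_subset[OF uc] t0 by auto
  have Vc: "continuous_on {0..t} V"
    unfolding V_def by (rule indefinite_integral_continuous_1[OF integrable_continuous_interval[OF uct]])
  have dV: "(V has_real_derivative u s) (at s within {0..t})" if "s \<in> {0..t}" for s
    unfolding V_def by (rule integral_has_real_derivative[OF uct that])
  text \<open>\<phi> = e^(-Ks) (V + S/K) is nonincreasing, since \<phi>' \<le> 0 by the hypothesis.\<close>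
  have dphi: "(\<phi> has_real_derivative \<phi>' s) (at s within {0..t})" if "s \<in> {0..t}" for s
  proof -
    have d1: "((\<lambda>s. exp (- K * s)) has_real_derivative exp (- K * s) * (- K)) (at s within {0..t})"
      by (rule DERIV_chain2[OF DERIV_exp]) (auto intro!: derivative_eq_intros)
    have "(\<phi> has_real_derivative exp (- K * s) * (- K) * (V s + S / K) + u s * exp (- K * s))
            (at s within {0..t})"
      unfolding \<phi>_def by (rule DERIV_mult[OF d1 DERIV_add[OF dV[OF that] DERIV_const, simplified]])
    moreover have "exp (- K * s) * (- K) * (V s + S / K) + u s * exp (- K * s) = \<phi>' s"
      unfolding \<phi>'_def using K by (simp add: field_simps)
    ultimately show ?thesis by simp
  qed
  have phic: "continuous_on {0..t} \<phi>'" unfolding \<phi>'_def using uct Vc by (intro continuous_intros)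
  have "(\<phi>' has_integral (\<phi> t - \<phi> 0)) {0..t}"
    by (rule fundamental_theorem_of_calculus[OF t0(1)])
       (use dphi in \<open>auto simp: has_real_derivative_iff_has_vector_derivative[symmetric]\<close>)
  then have "\<phi> t - \<phi> 0 = integral {0..t} \<phi>'" by (simp add: integral_unique)
  also have "\<dots> \<le> (t - 0) * 0"
  proof (rule integral_le_length_times[OF phic t0(1)])
    fix s assume s: "s \<in> {0..t}"
    have "u s - K * V s - S \<le> 0" using bd[of s] s t0 by (simp add: V_def)
    then show "\<phi>' s \<le> 0" unfolding \<phi>'_def by (simp add: mult_nonneg_nonpos)
  qed
  finally have "exp (- K * t) * (V t + S / K) \<le> S / K" by (simp add: \<phi>_def V_def)
  then have "V t + S / K \<le> S / K * exp (K * t)"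
    by (simp add: exp_minus field_simps)
  then have "K * (V t + S / K) \<le> K * (S / K * exp (K * t))" using K by (intro mult_left_mono) auto
  then have "K * V t \<le> S * exp (K * t) - S" using K by (simp add: distrib_left)
  then show ?thesis using bd[OF t] by (simp add: V_def)
qed

definition path_mart :: "nat \<Rightarrow> real \<Rightarrow> (real \<times> real \<Rightarrow> real) \<Rightarrow> (real \<Rightarrow> real \<times> real) \<Rightarrow> real \<Rightarrow> real" where
  "path_mart N \<mu> c p t = c (p t) - c (p 0) - integral {0..t} (\<lambda>s. drift N \<mu> c (p s))"

lemma path_mart_continuous:
  assumes c: "c \<in> {fst, snd}" and p: "continuous_on {0..} p"
  shows "continuous_on {0..T} (path_mart N \<mu> c p)"
proof -
  have pT: "continuous_on {0..T} p" using continuous_on_subset[OF p] by auto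
  have "continuous_on {0..T} (\<lambda>t. integral {0..t} (\<lambda>s. drift N \<mu> c (p s)))"
    by (rule indefinite_integral_continuous_1 integrable_continuous_interval drift_continuous[OF c pT])+
  then show ?thesis unfolding path_mart_def[abs_def]
    using coordinate_continuous[OF c pT] by (intro continuous_intros)
qed

text \<open>Coordinatewise, the deviation of a path p from the ODE solution w (with the same starting
  point) is its martingale part plus the integrated drift difference, bounded by Lipschitz
  continuity of the drift.\<close>
lemma coordinate_deviation:
  assumes mu: "0 < \<mu>" "\<mu> < 1" and c: "c \<in> {fst, snd}" and s: "0 \<le> s"
    and pc: "continuous_on {0..} p" and pr: "\<And>t. 0 \<le> t \<Longrightarrow> p t \<in> {0..1} \<times> {0..1}"
    and wc: "continuous_on {0..} w" and wr: "\<And>t. 0 \<le> t \<Longrightarrow> w t \<in> {0..1} \<times> {0..1}"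
    and p0: "p 0 = w 0" and wint: "c (w s) = c (w 0) + integral {0..s} (\<lambda>r. drift N \<mu> c (w r))"
  shows "\<bar>c (p s) - c (w s)\<bar> \<le> \<bar>path_mart N \<mu> c p s\<bar>
           + 6 * real N * integral {0..s} (\<lambda>r. \<bar>fst (p r) - fst (w r)\<bar> + \<bar>snd (p r) - snd (w r)\<bar>)"
proof -
  define u where "u r = \<bar>fst (p r) - fst (w r)\<bar> + \<bar>snd (p r) - snd (w r)\<bar>" for r
  have pc': "continuous_on {0..s} p" and wc': "continuous_on {0..s} w"
    using continuous_on_subset[OF pc] continuous_on_subset[OF wc] by auto
  have dc: "continuous_on {0..s} (\<lambda>r. drift N \<mu> c (p r) - drift N \<mu> c (w r))"
    using drift_continuous[OF c pc'] drift_continuous[OF c wc'] by (intro continuous_intros)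
  have "c (p s) - c (w s) = path_mart N \<mu> c p s + integral {0..s} (\<lambda>r. drift N \<mu> c (p r) - drift N \<mu> c (w r))"
    unfolding path_mart_def wint p0
    using integral_diff[OF integrable_continuous_interval[OF drift_continuous[OF c pc']]
        integrable_continuous_interval[OF drift_continuous[OF c wc']]] by simp
  moreover have "\<bar>integral {0..s} (\<lambda>r. drift N \<mu> c (p r) - drift N \<mu> c (w r))\<bar>
                   \<le> integral {0..s} (\<lambda>r. 6 * real N * u r)"
    unfolding real_norm_def[symmetric]
  proof (rule Henstock_Kurzweil_Integration.integral_norm_bound_integral[OF integrable_continuous_interval[OF dc]])
    show "(\<lambda>r. 6 * real N * u r) integrable_on {0..s}"
      unfolding u_def using pc' wc' by (intro integrable_continuous_interval continuous_intros)
    show "norm (drift N \<mu> c (p r) - drift N \<mu> c (w r)) \<le> 6 * real N * u r" if "r \<in> {0..s}" for r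
      using drift_lipschitz[OF mu c pr wr] that unfolding u_def by auto
  qed
  ultimately show ?thesis by (simp add: u_def)
qed

text \<open>Pathwise comparison: if both martingale parts of the path p are bounded on [0,T] by s0 in
  the l^1 sense, then |p t - w t|^2 \<le> s0^2 e^(24 N T) for t \<in> [0,T] (Gronwall with K = 12 N).\<close>
lemma pathwise_comparison:
  assumes mu: "0 < \<mu>" "\<mu> < 1" and N: "1 \<le> N"
    and pc: "continuous_on {0..} p" and pr: "\<And>t. 0 \<le> t \<Longrightarrow> p t \<in> {0..1} \<times> {0..1}"
    and wc: "continuous_on {0..} w" and wr: "\<And>t. 0 \<le> t \<Longrightarrow> w t \<in> {0..1} \<times> {0..1}"
    and p0: "p 0 = w 0"
    and wint: "\<And>c t. c \<in> {fst, snd} \<Longrightarrow> 0 \<le> t \<Longrightarrow> c (w t) = c (w 0) + integral {0..t} (\<lambda>r. drift N \<mu> c (w r))"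
    and s0: "\<And>t. t \<in> {0..T} \<Longrightarrow> \<bar>path_mart N \<mu> fst p t\<bar> + \<bar>path_mart N \<mu> snd p t\<bar> \<le> s0"
    and t: "t \<in> {0..T}"
  shows "(norm (p t - w t))^2 \<le> s0^2 * exp (24 * real N * T)"
proof -
  define K where "K = 12 * real N"
  define u where "u r = \<bar>fst (p r) - fst (w r)\<bar> + \<bar>snd (p r) - snd (w r)\<bar>" for r
  have K: "0 < K" using N by (simp add: K_def)
  have uc: "continuous_on {0..T} u"
    unfolding u_def using continuous_on_subset[OF pc] continuous_on_subset[OF wc]
    by (intro continuous_intros) auto
  have "u s \<le> s0 + K * integral {0..s} u" if s: "s \<in> {0..T}" for s
    using coordinate_deviation[OF mu _ _ pc pr wc wr p0 wint, of fst s] s0[OF s]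
      coordinate_deviation[OF mu _ _ pc pr wc wr p0 wint, of snd s] s
    by (simp add: u_def[abs_def] K_def)
  then have "u t \<le> s0 * exp (K * t)" by (rule gronwall[OF uc K _ t])
  moreover have s0_nonneg: "0 \<le> s0" using s0[of 0] t by (smt (verit) atLeastAtMost_iff)
  then have "s0 * exp (K * t) \<le> s0 * exp (K * T)" using t K by (intro mult_left_mono) auto
  ultimately have ut: "u t \<le> s0 * exp (K * T)" by linarith
  have "p t - w t = (fst (p t) - fst (w t), snd (p t) - snd (w t))" by (simp add: prod_eq_iff)
  then have "(norm (p t - w t))^2 = (fst (p t) - fst (w t))^2 + (snd (p t) - snd (w t))^2"
    by (simp add: norm_Pair)
  also have "\<dots> \<le> (u t)^2" unfolding u_def by (simp add: power2_eq_square abs_mult algebra_simps)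
  also have "\<dots> \<le> (s0 * exp (K * T))^2" using ut by (intro power_mono) (auto simp: u_def)
  also have "\<dots> = s0^2 * exp (24 * real N * T)"
    by (simp add: K_def exp_double[symmetric] algebra_simps)
  finally show ?thesis .
qed


section \<open>From grid maxima to the supremum\<close>

lemma grid_approximation:
  assumes T: "0 < T" and t: "t \<in> {0..T}"
  obtains k where "\<And>n. k n \<le> n" "(\<lambda>n. grid T n (k n)) \<longlonglongrightarrow> t"
proof
  define k where "k n = nat \<lfloor>t * real n / T\<rfloor>" for n
  show kn: "k n \<le> n" for n
  proof -
    have "t * real n \<le> T * real n" using t by (intro mult_right_mono) auto
    then have "t * real n / T \<le> real n" using T by (simp add: divide_le_eq mult.commute)
    then have "\<lfloor>t * real n / T\<rfloor> \<le> int n" by (simp add: floor_le_iff)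
    then show ?thesis unfolding k_def by simp
  qed
  have bounds: "t - T / real n \<le> grid T n (k n) \<and> grid T n (k n) \<le> t" if "0 < n" for n
  proof -
    define q where "q = t * real n / T"
    have "real (k n) = real_of_int \<lfloor>q\<rfloor>" unfolding k_def q_def using t T by simp
    then have g: "grid T n (k n) = real_of_int \<lfloor>q\<rfloor> * T / real n" by (simp add: grid_def)
    have "real_of_int \<lfloor>q\<rfloor> * T / real n \<le> q * T / real n"
         "(q - 1) * T / real n \<le> real_of_int \<lfloor>q\<rfloor> * T / real n"
      using T that by (auto intro!: divide_right_mono mult_right_mono)
    moreover have "q * T / real n = t" "(q - 1) * T / real n = t - T / real n"
      using T that by (simp_all add: q_def field_simps)
    ultimately show ?thesis unfolding g by simp
  qed
  show "(\<lambda>n. grid T n (k n)) \<longlonglongrightarrow> t"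
  proof (rule real_tendsto_sandwich[where f="\<lambda>n. t - T / real n" and h="\<lambda>n. t"])
    show "\<forall>\<^sub>F n in sequentially. t - T / real n \<le> grid T n (k n)"
      and "\<forall>\<^sub>F n in sequentially. grid T n (k n) \<le> t"
      using bounds by (auto simp: eventually_sequentially intro!: exI[of _ 1])
    show "(\<lambda>n. t - T / real n) \<longlonglongrightarrow> t"
      using tendsto_diff[OF tendsto_const lim_const_over_n[of T]] by simp
  qed simp
qed

lemma continuous_le_liminf_grid_max:
  assumes T: "0 < T" and m1: "continuous_on {0..T} m1" and m2: "continuous_on {0..T} m2"
    and t: "t \<in> {0..T}" and c: "0 \<le> c"
  shows "ennreal (c * ((m1 t)^2 + (m2 t)^2))
           \<le> liminf (\<lambda>n. ennreal (c * ((grid_max T m1 n)^2 + (grid_max T m2 n)^2)))"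
proof -
  obtain k where kn: "\<And>n. k n \<le> n" and lim: "(\<lambda>n. grid T n (k n)) \<longlonglongrightarrow> t"
    using grid_approximation[OF T t] by blast
  have in_T: "grid T n (k n) \<in> {0..T}" for n
    using grid_nonneg[of T n "k n"] grid_le[OF _ kn] T by auto
  have "(\<lambda>n. ennreal (c * ((m1 (grid T n (k n)))^2 + (m2 (grid T n (k n)))^2)))
          \<longlonglongrightarrow> ennreal (c * ((m1 t)^2 + (m2 t)^2))"
    using continuous_on_tendsto_compose[OF m1 lim t] continuous_on_tendsto_compose[OF m2 lim t] in_T
    by (intro tendsto_ennrealI tendsto_intros) auto
  then have "ennreal (c * ((m1 t)^2 + (m2 t)^2))
      = liminf (\<lambda>n. ennreal (c * ((m1 (grid T n (k n)))^2 + (m2 (grid T n (k n)))^2)))"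
    by (simp add: lim_imp_Liminf)
  also have "\<dots> \<le> liminf (\<lambda>n. ennreal (c * ((grid_max T m1 n)^2 + (grid_max T m2 n)^2)))"
  proof (intro Liminf_mono always_eventually allI ennreal_leI mult_left_mono[OF _ c] add_mono)
    fix n
    have sq: "(m (grid T n (k n)))^2 \<le> (grid_max T m n)^2" for m
      using power_mono[OF running_max_ge[OF kn[of n], where x="\<lambda>j. m (grid T n j)"] abs_ge_zero, where n=2]
      unfolding grid_max_def by simp
    show "(m1 (grid T n (k n)))^2 \<le> (grid_max T m1 n)^2" by (rule sq)
    show "(m2 (grid T n (k n)))^2 \<le> (grid_max T m2 n)^2" by (rule sq)
  qed
  finally show ?thesis .
qed

lemma sup_deviation_le_liminf:
  assumes mu: "0 < \<mu>" "\<mu> < 1" and N: "1 \<le> N" and T: "0 < T"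
    and pc: "continuous_on {0..} p" and pr: "\<And>t. 0 \<le> t \<Longrightarrow> p t \<in> {0..1} \<times> {0..1}"
    and wc: "continuous_on {0..} w" and wr: "\<And>t. 0 \<le> t \<Longrightarrow> w t \<in> {0..1} \<times> {0..1}"
    and p0: "p 0 = w 0"
    and wint: "\<And>c t. c \<in> {fst, snd} \<Longrightarrow> 0 \<le> t \<Longrightarrow> c (w t) = c (w 0) + integral {0..t} (\<lambda>r. drift N \<mu> c (w r))"
  shows "ennreal (SUP t\<in>{0..T}. (norm (p t - w t))^2)
           \<le> liminf (\<lambda>n. ennreal (2 * exp (24 * real N * T) *
                 ((grid_max T (path_mart N \<mu> fst p) n)^2 + (grid_max T (path_mart N \<mu> snd p) n)^2)))"
    (is "_ \<le> ?L")
proof (cases "?L = \<top>")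
  case False
  define e where "e = exp (24 * real N * T)"
  have e0: "0 < e" by (simp add: e_def)
  obtain r where r: "?L = ennreal r" "0 \<le> r" using False by (cases ?L rule: ennreal_cases) auto
  have mart_bound: "\<bar>path_mart N \<mu> fst p t\<bar> + \<bar>path_mart N \<mu> snd p t\<bar> \<le> sqrt (r / e)"
    if t: "t \<in> {0..T}" for t
  proof -
    have "ennreal (2 * e * ((path_mart N \<mu> fst p t)^2 + (path_mart N \<mu> snd p t)^2)) \<le> ennreal r"
      unfolding r(1)[symmetric] e_def
      by (rule continuous_le_liminf_grid_max[OF T path_mart_continuous path_mart_continuous t])
         (use pc in auto)
    then have "2 * e * ((path_mart N \<mu> fst p t)^2 + (path_mart N \<mu> snd p t)^2) \<le> r"
      unfolding ennreal_le_iff[OF r(2)] .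
    then have "2 * ((path_mart N \<mu> fst p t)^2 + (path_mart N \<mu> snd p t)^2) \<le> r / e"
      using e0 by (simp add: le_divide_eq algebra_simps)
    moreover have "(\<bar>path_mart N \<mu> fst p t\<bar> + \<bar>path_mart N \<mu> snd p t\<bar>)^2
                     \<le> 2 * ((path_mart N \<mu> fst p t)^2 + (path_mart N \<mu> snd p t)^2)"
      using sum_squares_bound[of "\<bar>path_mart N \<mu> fst p t\<bar>" "\<bar>path_mart N \<mu> snd p t\<bar>"]
      by (simp add: power2_eq_square algebra_simps)
    ultimately show ?thesis by (intro real_le_rsqrt) linarith
  qed
  have "(norm (p t - w t))^2 \<le> (sqrt (r / e))^2 * exp (24 * real N * T)" if "t \<in> {0..T}" for t
    by (rule pathwise_comparison[OF mu N pc pr wc wr p0 wint mart_bound that])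
  moreover have "(sqrt (r / e))^2 * exp (24 * real N * T) = r" using r(2) by (simp add: e_def)
  ultimately have "(SUP t\<in>{0..T}. (norm (p t - w t))^2) \<le> r"
    using T by (intro cSUP_least) auto
  then show ?thesis using r by (simp add: ennreal_leI)
qed simp

section \<open>The main estimate\<close>

text \<open>E sup_{t \<le> T} |Z_t - w_t|^2 \<le> 4 T e^(24 N T): by Fatou's lemma from the pathwise bound,
  since E (grid_max of M^c)^2 \<le> T for both coordinates.\<close>
lemma expected_sup_deviation:
  assumes sol: "solves_mp_L1 N \<mu> M F Z (x0, y0)" and ode: "ode_sol_L1 N \<mu> (x0, y0) w"
    and N: "1 \<le> N" and mu: "0 < \<mu>" "\<mu> < 1"
    and z0: "(x0, y0) \<in> {0<..<1} \<times> {0<..<1}" and T: "0 < T"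
  shows "(\<integral>\<^sup>+\<omega>. ennreal (SUP t\<in>{0..T}. (norm (Z t \<omega> - w t))^2) \<partial>M)
           \<le> ennreal (4 * T * exp (24 * real N * T))"
proof -
  interpret X: bounded_coordinate_process M F "\<lambda>t \<omega>. fst (Z t \<omega>)" "\<lambda>t \<omega>. drift N \<mu> fst (Z t \<omega>)" T "2 * real N"
    by (rule solution_coordinate_process[OF sol mu _ T]) simp
  interpret Y: bounded_coordinate_process M F "\<lambda>t \<omega>. snd (Z t \<omega>)" "\<lambda>t \<omega>. drift N \<mu> snd (Z t \<omega>)" T "2 * real N"
    by (rule solution_coordinate_process[OF sol mu _ T]) simp
  define e where "e = exp (24 * real N * T)"
  define H where "H n \<omega> = 2 * e * ((grid_max T (\<lambda>t. X.mart t \<omega>) n)^2 + (grid_max T (\<lambda>t. Y.mart t \<omega>) n)^2)"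
    for n \<omega>
  have Z0: "Z 0 \<omega> = (x0, y0)" and Zc: "continuous_on {0..} (\<lambda>t. Z t \<omega>)"
    and Zr: "\<And>t. 0 \<le> t \<Longrightarrow> Z t \<omega> \<in> {0..1} \<times> {0..1}" if "\<omega> \<in> space M" for \<omega>
    using sol that unfolding solves_mp_L1_def by auto
  have w0: "w 0 = (x0, y0)" using ode unfolding ode_sol_L1_def by simp
  have pathwise: "ennreal (SUP t\<in>{0..T}. (norm (Z t \<omega> - w t))^2) \<le> liminf (\<lambda>n. ennreal (H n \<omega>))"
    if om: "\<omega> \<in> space M" for \<omega>
  proof -
    have "X.mart = (\<lambda>t \<omega>. path_mart N \<mu> fst (\<lambda>t. Z t \<omega>) t)" "Y.mart = (\<lambda>t \<omega>. path_mart N \<mu> snd (\<lambda>t. Z t \<omega>) t)"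
      by (simp_all add: fun_eq_iff X.mart_def Y.mart_def path_mart_def)
    then show ?thesis
      unfolding H_def e_def
      using sup_deviation_le_liminf[OF mu N T Zc[OF om] Zr[OF om] ode_continuous[OF ode]
          ode_stays_in_square[OF ode N mu(1) z0] _ ode_integral_form[OF ode]] Z0[OF om] w0
      by (simp add: comp_def)
  qed
  have H_int: "integrable M (H n)" for n
    unfolding H_def using X.grid_max_square_integrable Y.grid_max_square_integrable by simp
  have H_expectation: "integral\<^sup>N M (\<lambda>\<omega>. ennreal (H n \<omega>)) \<le> ennreal (4 * T * e)" if n: "0 < n" for n
  proof -
    have "integral\<^sup>N M (\<lambda>\<omega>. ennreal (H n \<omega>)) = ennreal (\<integral>\<omega>. H n \<omega> \<partial>M)"
      by (rule nn_integral_eq_integral[OF H_int]) (simp add: H_def e_def)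
    also have "(\<integral>\<omega>. H n \<omega> \<partial>M) = 2 * e * ((\<integral>\<omega>. (grid_max T (\<lambda>t. X.mart t \<omega>) n)^2 \<partial>M)
                                         + (\<integral>\<omega>. (grid_max T (\<lambda>t. Y.mart t \<omega>) n)^2 \<partial>M))"
      unfolding H_def using X.grid_max_square_integrable Y.grid_max_square_integrable by simp
    also have "\<dots> \<le> 2 * e * (T + T)"
      using X.grid_max_second_moment[OF n] Y.grid_max_second_moment[OF n]
      by (intro mult_left_mono add_mono) (auto simp: e_def)
    finally show ?thesis by (simp add: ennreal_leI algebra_simps)
  qed
  have "(\<integral>\<^sup>+\<omega>. ennreal (SUP t\<in>{0..T}. (norm (Z t \<omega> - w t))^2) \<partial>M)
        \<le> (\<integral>\<^sup>+\<omega>. liminf (\<lambda>n. ennreal (H n \<omega>)) \<partial>M)"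
    by (rule nn_integral_mono) (rule pathwise)
  also have "\<dots> \<le> liminf (\<lambda>n. integral\<^sup>N M (\<lambda>\<omega>. ennreal (H n \<omega>)))"
    by (rule nn_integral_liminf) (use H_int in simp)
  also have "\<dots> \<le> ennreal (4 * T * e)"
    by (rule Liminf_le) (use H_expectation in \<open>auto simp: eventually_sequentially intro: exI[of _ 1]\<close>)
  finally show ?thesis by (simp add: e_def)
qed

text \<open>With T = (log N) / (96 N) one has e^(24 N T) = N^(1/4), and 4 T N^(1/4) \<le> N^(-1/2)
  because log N \<le> 4 N^(1/4).\<close>
lemma time_horizon_estimate:
  fixes N :: nat assumes N: "2 \<le> N"
  shows "4 * (1/96 * ln (real N) / real N) * exp (24 * real N * (1/96 * ln (real N) / real N))
         \<le> real N powr (-1/2)"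
proof -
  have Np: "0 < real N" using N by simp
  define a where "a = real N powr (1/4)"
  define L where "L = ln (real N)"
  have a0: "0 < a" using Np by (simp add: a_def)
  have ea: "exp (24 * real N * (1/96 * ln (real N) / real N)) = a"
  proof -
    have "24 * real N * (1/96 * ln (real N) / real N) = 1/4 * ln (real N)" using Np by (simp add: field_simps)
    then show ?thesis using Np by (simp add: a_def powr_def)
  qed
  have a4: "a^4 = real N" unfolding a_def using powr_power[of "real N" "1/4" 4] Np by simp
  have a2: "real N powr (-1/2) = 1 / a^2"
    unfolding a_def using powr_power[of "real N" "1/4" 2] Np by (simp add: powr_minus_divide)
  have lnL: "L \<le> 4 * a"
    using ln_le_minus_one[OF a0] Np by (simp add: a_def L_def)
  have "4 * (1/96 * ln (real N) / real N) * a = L * a / (24 * a^4)"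
    using Np by (simp add: L_def a4 field_simps)
  also have "\<dots> = L / (24 * a^3)"
    using a0 by (simp add: eval_nat_numeral field_simps)
  also have "\<dots> \<le> (24 * a) / (24 * a^3)" using lnL a0 by (intro divide_right_mono) auto
  also have "\<dots> = 1 / a^2" using a0 by (simp add: power2_eq_square power3_eq_cube)
  finally show ?thesis unfolding ea a2 .
qed

theorem theorem1:
  fixes \<mu> \<epsilon> :: real
  assumes "0 < \<mu>" "\<mu> < 1" "0 < \<epsilon>" "\<epsilon> < sqrt \<mu>"
  shows "\<exists>\<gamma>>0. \<exists>N0::nat. \<forall>N\<ge>N0. \<forall>x0 y0.
           x0 \<in> {\<epsilon>..1-\<epsilon>} \<longrightarrow> y0 \<in> {\<epsilon>..1-\<epsilon>} \<longrightarrow>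
           (\<forall>(M::'a measure) F Z w. solves_mp_L1 N \<mu> M F Z (x0, y0) \<longrightarrow>
              ode_sol_L1 N \<mu> (x0, y0) w \<longrightarrow>
              (\<integral>\<^sup>+\<omega>. ennreal (SUP t\<in>{0..\<gamma> * ln (real N) / real N}. (norm (Z t \<omega> - w t))^2) \<partial>M)
                \<le> ennreal (real N powr (-1/2)))"
proof (intro exI[of _ "1/96"] conjI exI[of _ 2] allI impI)
  show "(0::real) < 1/96" by simp
  fix N :: nat and x0 y0 :: real and M :: "'a measure" and F Z w
  assume N: "2 \<le> N" and x: "x0 \<in> {\<epsilon>..1-\<epsilon>}" and y: "y0 \<in> {\<epsilon>..1-\<epsilon>}"
    and sol: "solves_mp_L1 N \<mu> M F Z (x0, y0)" and ode: "ode_sol_L1 N \<mu> (x0, y0) w"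
  define T where "T = 1/96 * ln (real N) / real N"
  have T: "0 < T" using N by (simp add: T_def)
  have z0: "(x0, y0) \<in> {0<..<1} \<times> {0<..<1}" using x y assms(3) by auto
  have "(\<integral>\<^sup>+\<omega>. ennreal (SUP t\<in>{0..T}. (norm (Z t \<omega> - w t))^2) \<partial>M)
        \<le> ennreal (4 * T * exp (24 * real N * T))"
    by (rule expected_sup_deviation[OF sol ode _ assms(1,2) z0 T]) (use N in simp)
  also have "\<dots> \<le> ennreal (real N powr (-1/2))"
    unfolding T_def by (rule ennreal_leI[OF time_horizon_estimate[OF N]])
  finally show "(\<integral>\<^sup>+\<omega>. ennreal (SUP t\<in>{0..1/96 * ln (real N) / real N}. (norm (Z t \<omega> - w t))^2) \<partial>M)
        \<le> ennreal (real N powr (-1/2))" by (simp add: T_def)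
qed

end
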